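(* Assume (A1) and (A2), and let $\alpha>0$ be arbitrary. Along every trajectory of the algorithm described in the context, for all $k\ge0$, $$V_\xi(k+1)-V_\xi(k)\le-\tfrac12\|\bm e_\xi(k)\|^2+\beta_{\xi x}\|\bm e_x(k)\|^2+\alpha^2\max_ib_{2i}\big(\|\bm e_\psi(k)\|^2+\|\bm e_\xi(k)\|^2+N\|\bm e_{\bar x}(k)\|^2\big).$$
   Context: Game. $N$ coalitions; coalition $i$ has agents $i1,\dots,in_i$; $\mathcal V_i=\{i1,\dots,in_i\}$, $\mathcal V=\bigcup_i\mathcal V_i$, $n_{\mathrm{sum}}=\sum_in_i$; agents ordered lexicographically. Agent $ij$ has state $x_{ij}\in\mathbb{R}$; $\bm x_i=(x_{i1},\dots,x_{in_i})^T$, $\bm x=(\bm x_1^T,\dots,\bm x_N^T)^T$. Costs $f_{ij}:\mathbb{R}^{n_{\mathrm{sum}}}\to\mathbb{R}$, $f_i=\sum_jf_{ij}$. For $\bm y\in\mathbb{R}^N$, $g_i(\bm y)=f_i((y_1\mathbf 1_{n_1}^T,\dots,y_N\mathbf 1_{n_N}^T)^T)$; $\bm y^*$ is the Nash equilibrium of the game $\min_{y_i}g_i(\bm y)$, $i=1,\dots,N$, and $\bm x^*=(y_1^*\mathbf 1_{n_1}^T,\dots,y_N^*\mathbf 1_{n_N}^T)^T$ (so $\mathbf 1_{n_i}^T\frac{\partial f_i}{\partial\bm x_i}(\bm x^* )=0$ for all $i$). Graph. Directed graph $\mathcal G=(\mathcal V,\mathcal E)$, $(pq,ij)\in\mathcal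 E$ meaning $ij$ receives from $pq$. $a_{ij}^{pq}=1$ if $(pq,ij)\in\mathcal E$, $pq\ne ij$, else $0$; $d_{ij}=\sum_{pq}a_{ij}^{pq}$; Laplacian $L$ with diagonal $d_{ij}$, off-diagonal $-a_{ij}^{pq}$. $\mathcal G_i$: subgraph induced on $\mathcal V_i$. $\mathcal N_{ij}^{\mathrm{in}}$, $\mathcal N_{ij}^{i\text{-in}}$, $\mathcal N_{ij}^{i\text{-out}}$: in-neighbors in $\mathcal G$, in-neighbors and out-neighbors in $\mathcal G_i$. Assumptions. (A1) $\mathcal G$ and every $\mathcal G_i$ are strongly connected. (A2) each $f_{ij}$ is convex, $C^2$, with $\nabla f_{ij}$ Lipschitz of constant $l_{ij}$. Algorithm. Weights $r_{ij}^{im}>0$ for $im\in\mathcal N_{ij}^{i\text{-in}}\cup\{ij\}$ summing to 1, $c_{im}^{ij}>0$ for $im\in\mathcal N_{ij}^{i\text{-out}}\cup\{ij\}$ summing to 1, other within-coalition weights $0$; $R_i=[r_{ij}^{im}]$, $C_i=[c_{ij}^{im}]$ ($j$ row, $m$ column). Step size $\alpha>0$. Initialization: $x_{ij}(0),\bm\xi_{ij}(0)\in\mathbb{R}^{n_{\mathrm{sum}}}$ arbitrary, $\psi_{ij}^{il}(0)=\frac{\partial f_{ij}}{\partial x_{il}}(\bm\xi_{ij}(0))$. For $k\ge0$: $x_{ij}(k+1)=\sum_mr_{ij}^{im}x_{im}(k)-\frac{\alpha}{n_i}\sum_{m=1}^{n_i}\psi_{ij}^{im}(k)$; $\xi_{ij}^{pq}(k+1)=\xi_{ij}^{pq}(k)-\frac1{d_{ij}+a_{ij}^{pq}}\big(\sum_{lm\in\mathcal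 N_{ij}^{\mathrm{in}}}(\xi_{ij}^{pq}(k)-\xi_{lm}^{pq}(k))+a_{ij}^{pq}(\xi_{ij}^{pq}(k)-x_{pq}(k))\big)$ for all $pq\in\mathcal V$; $\psi_{ij}^{il}(k+1)=\sum_mc_{ij}^{im}\psi_{im}^{il}(k)+\frac{\partial f_{ij}}{\partial x_{il}}(\bm\xi_{ij}(k+1))-\frac{\partial f_{ij}}{\partial x_{il}}(\bm\xi_{ij}(k))$. Auxiliary quantities. $u_i$: $u_i^TR_i=u_i^T$, $u_i^T\mathbf 1=n_i$; $v_i$: $C_iv_i=v_i$, $\mathbf 1^Tv_i=n_i$. $\Gamma$, $A_d$: diagonal $n_{\mathrm{sum}}^2\times n_{\mathrm{sum}}^2$ matrices with entries $\frac1{d_{ij}+a_{ij}^{pq}}$, $a_{ij}^{pq}$ indexed by $(ij,pq)$, $ij$ outer, $pq$ inner. $H=\Gamma(L\otimes I_{n_{\mathrm{sum}}}+A_d)$, $\mathcal M=I-H$; $W_{\mathcal M}$: symmetric positive definite solution of $\mathcal M^TW\mathcal M-W=-I$. Spectral matrix norms. $\beta_{\xi x}=n_{\mathrm{sum}}(4\|\mathcal M^TW_{\mathcal M}\|^2+2\|W_{\mathcal M}\|)\|H\|^2$, $b_{0i}=n_i+(\frac1{n_i}+\max_kn_k)\|v_i\|^2\sum_{j=1}^{n_i}l_{ij}^2$, $b_{2i}=n_{\mathrm{sum}}(4\|\mathcal M^TW_{\mathcal M}\|^2+2\|W_{\mathcal M}\|)\|\frac{\mathbf 1_{n_i}u_i^T}{n_i^2}\|^2b_{0i}$.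 Errors and Lyapunov function. $\bm\psi_i=(\psi_{i1}^{i1},\dots,\psi_{i1}^{in_i},\psi_{i2}^{i1},\dots,\psi_{in_i}^{in_i})^T$, $\bar{\bm\psi}_i=\frac1{n_i}(\mathbf 1^T\otimes I_{n_i})\bm\psi_i$, $\bm e_{\psi_i}=\bm\psi_i-v_i\otimes\bar{\bm\psi}_i$. $\bar x_i=u_i^T\bm x_i/n_i$, $e_{\bar x_i}=\bar x_i-y_i^*$, $\bm e_{x_i}=\bm x_i-\mathbf 1_{n_i}\bar x_i$, $\bar{\bm X}=(\bar x_1\mathbf 1_{n_1}^T,\dots,\bar x_N\mathbf 1_{n_N}^T)^T$. $\bm\xi_i=(\bm\xi_{i1}^T,\dots,\bm\xi_{in_i}^T)^T$, $\bm\xi=(\bm\xi_1^T,\dots,\bm\xi_N^T)^T$, $\bm e_{\xi_i}=\bm\xi_i-\mathbf 1_{n_i}\otimes\bar{\bm X}$. $\bm e_\psi,\bm e_{\bar x},\bm e_x,\bm e_\xi$: stacks over $i$. $V_\xi(k)=\bm e_\xi(k)^TW_{\mathcal M}\bm e_\xi(k)$. *)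

theory Defs
  imports "HOL-Analysis.Analysis"
begin

(* Agents are the elements of a finite type 'v; coalitions the elements of a finite
   type 'c; coal v is the coalition of agent v.  Vectors in R^{n_sum} are real^'v,
   matrices acting on R^{n_sum^2} are real^('v*'v)^('v*'v), index (ij,pq), ij outer. *)

(* a_v^w = 1 iff (w,v) in E (v receives from w) and w <> v *)
definition adj :: "('v \<times> 'v) set \<Rightarrow> 'v \<Rightarrow> 'v \<Rightarrow> real" where
  "adj E v w = (if (w, v) \<in> E \<and> w \<noteq> v then 1 else 0)"

definition deg :: "('v::finite \<times> 'v) set \<Rightarrow> 'v \<Rightarrow> real" where
  "deg E v = (\<Sum>w\<in>UNIV. adj E v w)"

definition lap :: "('v::finite \<times> 'v) set \<Rightarrow> real^'v^'v" where
  "lap E = (\<chi> a b. if a = b then deg E a else - adj E a b)"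

definition Nin :: "('v \<times> 'v) set \<Rightarrow> 'v \<Rightarrow> 'v set" where
  "Nin E v = {w. (w, v) \<in> E \<and> w \<noteq> v}"

definition memb :: "('v \<Rightarrow> 'c) \<Rightarrow> 'c \<Rightarrow> 'v set" where
  "memb coal i = {v. coal v = i}"

definition ncard :: "('v \<Rightarrow> 'c) \<Rightarrow> 'c \<Rightarrow> nat" where
  "ncard coal i = card (memb coal i)"

definition Nin_c :: "('v \<times> 'v) set \<Rightarrow> ('v \<Rightarrow> 'c) \<Rightarrow> 'v \<Rightarrow> 'v set" where
  "Nin_c E coal v = {w. coal w = coal v \<and> (w, v) \<in> E \<and> w \<noteq> v}"

definition Nout_c :: "('v \<times> 'v) set \<Rightarrow> ('v \<Rightarrow> 'c) \<Rightarrow> 'v \<Rightarrow> 'v set" where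
  "Nout_c E coal v = {w. coal w = coal v \<and> (v, w) \<in> E \<and> w \<noteq> v}"

definition strongly_connected_on :: "'v set \<Rightarrow> ('v \<times> 'v) set \<Rightarrow> bool" where
  "strongly_connected_on S E \<longleftrightarrow> (\<forall>a\<in>S. \<forall>b\<in>S. (a, b) \<in> (E \<inter> S \<times> S)\<^sup>*)"

definition kron_I :: "real^'v^'v \<Rightarrow> real^('v \<times> 'w::finite)^('v \<times> 'w)" where
  "kron_I A = (\<chi> r s. A $ fst r $ fst s * (if snd r = snd s then 1 else 0))"

definition Gam :: "('v::finite \<times> 'v) set \<Rightarrow> real^('v \<times> 'v)^('v \<times> 'v)" where
  "Gam E = (\<chi> r s. if r = s then 1 / (deg E (fst r) + adj E (fst r) (snd r)) else 0)"

definition Ad :: "('v::finite \<times> 'v) set \<Rightarrow> real^('v \<times> 'v)^('v \<times> 'v)" where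
  "Ad E = (\<chi> r s. if r = s then adj E (fst r) (snd r) else 0)"

definition Hmat :: "('v::finite \<times> 'v) set \<Rightarrow> real^('v \<times> 'v)^('v \<times> 'v)" where
  "Hmat E = Gam E ** (kron_I (lap E) + Ad E)"

definition Mmat :: "('v::finite \<times> 'v) set \<Rightarrow> real^('v \<times> 'v)^('v \<times> 'v)" where
  "Mmat E = mat 1 - Hmat E"

definition snorm :: "real^'n^'m \<Rightarrow> real" where
  "snorm A = onorm (\<lambda>x. A *v x)"

definition C2 :: "('a::euclidean_space \<Rightarrow> real) \<Rightarrow> bool" where
  "C2 g \<longleftrightarrow> (\<exists>(g' :: 'a \<Rightarrow> ('a \<Rightarrow>\<^sub>L real)) (g'' :: 'a \<Rightarrow> ('a \<Rightarrow>\<^sub>L ('a \<Rightarrow>\<^sub>L real))).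
      (\<forall>x. (g has_derivative blinfun_apply (g' x)) (at x)) \<and>
      (\<forall>x. (g' has_derivative blinfun_apply (g'' x)) (at x)) \<and>
      continuous_on UNIV g'')"

definition pd :: "(real^'v \<Rightarrow> real) \<Rightarrow> real^'v \<Rightarrow> 'v \<Rightarrow> real" where
  "pd g x w = frechet_derivative g (at x) (axis w 1)"

definition grad :: "(real^'v \<Rightarrow> real) \<Rightarrow> real^'v \<Rightarrow> real^'v" where
  "grad g x = (\<chi> w. pd g x w)"

definition gcost :: "('v::finite \<Rightarrow> 'c) \<Rightarrow> ('v \<Rightarrow> real^'v \<Rightarrow> real) \<Rightarrow> 'c \<Rightarrow> real^'c \<Rightarrow> real" where
  "gcost coal f i y = (\<Sum>v\<in>memb coal i. f v (\<chi> w. y $ coal w))"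

definition is_NE :: "('v::finite \<Rightarrow> 'c::finite) \<Rightarrow> ('v \<Rightarrow> real^'v \<Rightarrow> real) \<Rightarrow> real^'c \<Rightarrow> bool" where
  "is_NE coal f y \<longleftrightarrow>
     (\<forall>i t. gcost coal f i y \<le> gcost coal f i (\<chi> c. if c = i then t else y $ c))"

definition xbar :: "('v::finite \<Rightarrow> 'c) \<Rightarrow> ('v \<Rightarrow> real) \<Rightarrow> real^'v \<Rightarrow> 'c \<Rightarrow> real" where
  "xbar coal u x i = (\<Sum>j\<in>memb coal i. u j * x $ j) / real (ncard coal i)"

definition e_xbar :: "('v::finite \<Rightarrow> 'c::finite) \<Rightarrow> ('v \<Rightarrow> real) \<Rightarrow> real^'c \<Rightarrow> real^'v \<Rightarrow> real^'c" where
  "e_xbar coal u ystar x = (\<chi> i. xbar coal u x i - ystar $ i)"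

definition e_x :: "('v::finite \<Rightarrow> 'c) \<Rightarrow> ('v \<Rightarrow> real) \<Rightarrow> real^'v \<Rightarrow> real^'v" where
  "e_x coal u x = (\<chi> v. x $ v - xbar coal u x (coal v))"

definition e_xi :: "('v::finite \<Rightarrow> 'c) \<Rightarrow> ('v \<Rightarrow> real) \<Rightarrow> real^'v \<Rightarrow> ('v \<Rightarrow> real^'v) \<Rightarrow> real^('v \<times> 'v)" where
  "e_xi coal u x xi = (\<chi> r. xi (fst r) $ snd r - xbar coal u x (coal (snd r)))"

definition psibar :: "('v::finite \<Rightarrow> 'c) \<Rightarrow> ('v \<Rightarrow> 'v \<Rightarrow> real) \<Rightarrow> 'c \<Rightarrow> 'v \<Rightarrow> real" where
  "psibar coal psi i l = (\<Sum>j\<in>memb coal i. psi j l) / real (ncard coal i)"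

(* e_psi, padded with zeros at the index pairs (j,l) lying in different coalitions *)
definition e_psi :: "('v::finite \<Rightarrow> 'c) \<Rightarrow> ('v \<Rightarrow> real) \<Rightarrow> ('v \<Rightarrow> 'v \<Rightarrow> real) \<Rightarrow> real^('v \<times> 'v)" where
  "e_psi coal vv psi = (\<chi> r. if coal (fst r) = coal (snd r)
       then psi (fst r) (snd r) - vv (fst r) * psibar coal psi (coal (fst r)) (snd r) else 0)"

definition Vxi :: "real^('v::finite \<times> 'v)^('v \<times> 'v) \<Rightarrow> real^('v \<times> 'v) \<Rightarrow> real" where
  "Vxi W e = e \<bullet> (W *v e)"

(* the n_i x n_i matrix 1 u_i^T / n_i^2, embedded as a block (zero-padded) in R^{n_sum x n_sum};
   zero padding does not change the spectral norm *)
definition Pmat :: "('v::finite \<Rightarrow> 'c) \<Rightarrow> ('v \<Rightarrow> real) \<Rightarrow> 'c \<Rightarrow> real^'v^'v" where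
  "Pmat coal u i = (\<chi> a b. if coal a = i \<and> coal b = i then u b / (real (ncard coal i))\<^sup>2 else 0)"

definition cW :: "('v::finite \<times> 'v) set \<Rightarrow> real^('v \<times> 'v)^('v \<times> 'v) \<Rightarrow> real" where
  "cW E W = 4 * (snorm (transpose (Mmat E) ** W))\<^sup>2 + 2 * snorm W"

definition beta_xix :: "('v::finite \<times> 'v) set \<Rightarrow> real^('v \<times> 'v)^('v \<times> 'v) \<Rightarrow> real" where
  "beta_xix E W = real CARD('v) * cW E W * (snorm (Hmat E))\<^sup>2"

definition b0 :: "('v::finite \<Rightarrow> 'c::finite) \<Rightarrow> ('v \<Rightarrow> real) \<Rightarrow> ('v \<Rightarrow> real) \<Rightarrow> 'c \<Rightarrow> real" where
  "b0 coal vv l i = real (ncard coal i)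
     + (1 / real (ncard coal i) + real (Max (range (ncard coal))))
       * (\<Sum>j\<in>memb coal i. (vv j)\<^sup>2) * (\<Sum>j\<in>memb coal i. (l j)\<^sup>2)"

definition b2 :: "('v::finite \<times> 'v) set \<Rightarrow> real^('v \<times> 'v)^('v \<times> 'v) \<Rightarrow> ('v \<Rightarrow> 'c::finite)
    \<Rightarrow> ('v \<Rightarrow> real) \<Rightarrow> ('v \<Rightarrow> real) \<Rightarrow> ('v \<Rightarrow> real) \<Rightarrow> 'c \<Rightarrow> real" where
  "b2 E W coal u vv l i = real CARD('v) * cW E W * (snorm (Pmat coal u i))\<^sup>2 * b0 coal vv l i"

end

theory Submission
  imports Defs
begin

(* The consensus error obeys e_xi(k+1) = M e_xi(k) + d(k), where d(k) mixes the disagreement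
   e_x(k), with pinning weights a/(d+a) \<le> 1/2, and the increments of the weighted coalition
   averages xbar_i.  The Lyapunov equation for W gives V_xi(k+1) - V_xi(k) \<le> -|e_xi|^2/2 +
   (cW/2)|d|^2.  Since u_i is a left eigenvector of R_i, xbar_i moves by -alpha/n_i^2 times the
   u_i-weighted sum of the trackers psi.  The trackers preserve the coalition sums of partial
   gradients, which vanish at the Nash equilibrium, so Lipschitz continuity of the gradients
   bounds that increment by e_psi, e_xi and e_xbar. *)

lemma norm_power2_cart: "(norm x)\<^sup>2 = (\<Sum>i\<in>UNIV. (x $ i)\<^sup>2)"
  for x :: "real^'n"
  unfolding power2_norm_eq_inner inner_vec_def by (simp add: power2_eq_square)

lemma sum_UNIV_prod: "(\<Sum>r\<in>UNIV. h r) = (\<Sum>a\<in>UNIV. \<Sum>b\<in>UNIV. h (a, b))"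
  for h :: "'a::finite \<times> 'b::finite \<Rightarrow> 'c::comm_monoid_add"
  by (simp add: sum.cartesian_product)

lemma diagonal_matrix_mult: "(\<chi> r s. if r = s then g r else 0) *v y = (\<chi> r. g r * y $ r)"
  for y :: "real^'n"
proof -
  have "(\<Sum>j\<in>UNIV. (if i = j then g i else 0) * y $ j) = g i * y $ i" for i
    by (simp add: if_distrib[of "\<lambda>a. a * _"] cong: if_cong)
  then show ?thesis
    by (simp add: matrix_vector_mult_def vec_eq_iff)
qed

lemma norm_mult_le_snorm: "norm (A *v x) \<le> snorm A * norm x"
  for A :: "real^'n^'m"
  unfolding snorm_def by (rule onorm[OF matrix_vector_mul_bounded_linear])

lemma snorm_nonneg: "0 \<le> snorm A"
  for A :: "real^'n^'m"
  unfolding snorm_def by (rule onorm_pos_le[OF matrix_vector_mul_bounded_linear])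

lemma power2_add_le_weighted:
  fixes a b t :: real
  assumes "0 < t"
  shows "(a + b)\<^sup>2 \<le> (1 + t) * a\<^sup>2 + (1 + 1 / t) * b\<^sup>2"
proof -
  have "0 \<le> (t * a - b)\<^sup>2 / t" using assms by simp
  also have "(t * a - b)\<^sup>2 / t = t * a\<^sup>2 - 2 * a * b + b\<^sup>2 / t"
    using assms by (simp add: power2_eq_square field_simps)
  finally show ?thesis by (simp add: power2_eq_square algebra_simps)
qed

lemma lyapunov_increment_le:
  fixes M W :: "real^'n^'n" and e d :: "real^'n"
  assumes W_sym: "transpose W = W" and W_lyap: "transpose M ** W ** M - W = - mat 1"
  shows "(M *v e + d) \<bullet> (W *v (M *v e + d)) - e \<bullet> (W *v e)
     \<le> -(1/2) * (norm e)\<^sup>2 + (2 * (snorm (transpose M ** W))\<^sup>2 + snorm W) * (norm d)\<^sup>2"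
proof -
  define s where "s = snorm (transpose M ** W)"
  have W_symmetric: "a \<bullet> (W *v b) = b \<bullet> (W *v a)" for a b
    by (metis W_sym dot_lmul_matrix inner_commute transpose_matrix_vector)
  have "(M *v e) \<bullet> (W *v (M *v e)) = e \<bullet> ((transpose M ** W ** M) *v e)"
    by (metis dot_lmul_matrix matrix_vector_mul_assoc transpose_matrix_vector vector_transpose_matrix)
  also have "transpose M ** W ** M = W - mat 1"
    using W_lyap by (simp add: algebra_simps)
  finally have decay: "(M *v e) \<bullet> (W *v (M *v e)) = e \<bullet> (W *v e) - (norm e)\<^sup>2"
    by (simp add: matrix_vector_mult_diff_rdistrib inner_diff_right power2_norm_eq_inner)
  have expand: "(M *v e + d) \<bullet> (W *v (M *v e + d)) =
      (M *v e) \<bullet> (W *v (M *v e)) + 2 * ((M *v e) \<bullet> (W *v d)) + d \<bullet> (W *v d)"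
    using W_symmetric[of d "M *v e"]
    by (simp add: matrix_vector_right_distrib inner_add_left inner_add_right)
  have transfer: "(M *v e) \<bullet> (W *v d) = e \<bullet> ((transpose M ** W) *v d)"
    by (metis dot_lmul_matrix matrix_vector_mul_assoc vector_transpose_matrix)
  have "e \<bullet> ((transpose M ** W) *v d) \<le> norm e * norm ((transpose M ** W) *v d)"
    by (rule Cauchy_Schwarz_ineq2[THEN abs_le_D1])
  also have "\<dots> \<le> norm e * (s * norm d)"
    unfolding s_def by (simp add: mult_left_mono norm_mult_le_snorm)
  finally have cross: "e \<bullet> ((transpose M ** W) *v d) \<le> norm e * (s * norm d)" .
  have "d \<bullet> (W *v d) \<le> norm d * norm (W *v d)"
    by (rule Cauchy_Schwarz_ineq2[THEN abs_le_D1])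
  also have "\<dots> \<le> norm d * (snorm W * norm d)"
    by (simp add: mult_left_mono norm_mult_le_snorm)
  finally have last: "d \<bullet> (W *v d) \<le> snorm W * (norm d)\<^sup>2"
    by (simp add: power2_eq_square algebra_simps)
  have young: "2 * (norm e * (s * norm d)) \<le> (1/2) * (norm e)\<^sup>2 + 2 * s\<^sup>2 * (norm d)\<^sup>2"
    using sum_squares_ge_zero[of "norm e / 2 - s * norm d" 0]
    by (simp add: power2_eq_square algebra_simps)
  show ?thesis
    using decay expand transfer cross last young unfolding s_def by (simp add: algebra_simps)
qed

subsection \<open>The consensus matrix\<close>

(* The weight a/(d+a) with which the xi-update pulls xi_ij^pq towards the true state x_pq. *)
definition pin_weight :: "('v::finite \<times> 'v) set \<Rightarrow> 'v \<Rightarrow> 'v \<Rightarrow> real" where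
  "pin_weight E v p = adj E v p / (deg E v + adj E v p)"

lemma adj_self [simp]: "adj E v v = 0"
  by (simp add: adj_def)

lemma adj_nonneg: "0 \<le> adj E v w"
  by (simp add: adj_def)

lemma adj_le_deg: "adj E v w \<le> deg E v"
  unfolding deg_def by (rule member_le_sum) (auto simp: adj_nonneg)

lemma deg_nonneg: "0 \<le> deg E v"
  unfolding deg_def by (simp add: sum_nonneg adj_nonneg)

lemma pin_weight_nonneg: "0 \<le> pin_weight E v p"
  by (simp add: pin_weight_def adj_nonneg deg_nonneg)

lemma pin_weight_le_half: "pin_weight E v p \<le> 1/2"
  using adj_le_deg[of E v p] by (auto simp: pin_weight_def adj_def)

lemma sum_pin_weight_le_1: "(\<Sum>p\<in>UNIV. pin_weight E v p) \<le> 1"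
proof -
  have "(\<Sum>p\<in>UNIV. pin_weight E v p) = (\<Sum>p\<in>UNIV. adj E v p / (deg E v + 1))"
    by (rule sum.cong) (auto simp: pin_weight_def adj_def)
  also have "\<dots> = deg E v / (deg E v + 1)"
    by (simp add: deg_def sum_divide_distrib)
  also have "\<dots> \<le> 1"
    using deg_nonneg[of E v] by simp
  finally show ?thesis .
qed

lemma sum_Nin_eq_sum_adj: "(\<Sum>w\<in>Nin E v. g w) = (\<Sum>w\<in>UNIV. adj E v w * g w)"
  for g :: "'v::finite \<Rightarrow> real"
proof -
  have "(\<Sum>w\<in>UNIV. adj E v w * g w) = (\<Sum>w\<in>UNIV. if w \<in> Nin E v then g w else 0)"
    by (rule sum.cong) (auto simp: adj_def Nin_def)
  then show ?thesis
    by (simp add: sum.If_cases)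
qed

lemma kron_I_mult_apply: "(kron_I L *v e) $ (v, p) = (\<Sum>w\<in>UNIV. L $ v $ w * e $ (w, p))"
  for e :: "real^('v::finite \<times> 'w::finite)"
proof -
  have "(\<Sum>b\<in>UNIV. L $ v $ a * (if p = b then 1 else 0) * e $ (a, b)) = L $ v $ a * e $ (a, p)"
    for a
  proof -
    have "(\<Sum>b\<in>UNIV. L $ v $ a * (if p = b then 1 else 0) * e $ (a, b))
        = (\<Sum>b\<in>UNIV. if p = b then L $ v $ a * e $ (a, b) else 0)"
      by (rule sum.cong) auto
    then show ?thesis
      by simp
  qed
  then show ?thesis
    unfolding kron_I_def matrix_vector_mult_def by (simp add: sum_UNIV_prod)
qed

lemma lap_mult_sum:
  "(\<Sum>w\<in>UNIV. lap E $ v $ w * e w) = deg E v * e v - (\<Sum>w\<in>UNIV. adj E v w * e w)"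
proof -
  have "(\<Sum>w\<in>UNIV. lap E $ v $ w * e w)
      = (\<Sum>w\<in>UNIV. (if v = w then deg E v * e w else 0) - adj E v w * e w)"
    by (intro sum.cong) (auto simp: lap_def)
  then show ?thesis
    by (simp add: sum_subtractf)
qed

lemma Mmat_mult_apply:
  fixes e :: "real^('v::finite \<times> 'v)"
  shows "(Mmat E *v e) $ (v, p) = e $ (v, p) -
     (deg E v * e $ (v, p) - (\<Sum>w\<in>UNIV. adj E v w * e $ (w, p)) + adj E v p * e $ (v, p))
       / (deg E v + adj E v p)"
proof -
  have "(Hmat E *v e) $ (v, p) = (deg E v * e $ (v, p) - (\<Sum>w\<in>UNIV. adj E v w * e $ (w, p))
       + adj E v p * e $ (v, p)) / (deg E v + adj E v p)"
    unfolding Hmat_def Gam_def Ad_def matrix_vector_mul_assoc[symmetric]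
      matrix_vector_mult_add_rdistrib
    by (simp add: diagonal_matrix_mult kron_I_mult_apply lap_mult_sum)
  then show ?thesis
    by (simp add: Mmat_def matrix_vector_mult_diff_rdistrib)
qed

lemma snorm_Hmat_ge_1:
  fixes E :: "('v::finite \<times> 'v) set" and W :: "real^('v \<times> 'v)^('v \<times> 'v)"
  assumes W_lyap: "transpose (Mmat E) ** W ** Mmat E - W = - mat 1"
  shows "1 \<le> snorm (Hmat E)"
proof -
  obtain v where dv: "deg E v \<noteq> 0"
  proof (rule ccontr)
    assume "\<not> thesis"
    then have deg0: "deg E v = 0" for v
      using that by blast
    have "adj E v w = 0" for v w
      using adj_le_deg[of E v w] adj_nonneg[of E v w] deg0[of v] by simp
    then have "Mmat E *v e = e" for e :: "real^('v \<times> 'v)"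
      by (simp add: vec_eq_iff Mmat_mult_apply deg0)
    then have "Mmat E = mat 1"
      by (simp add: matrix_eq)
    with W_lyap have "(mat 1 :: real^('v \<times> 'v)^('v \<times> 'v)) $ undefined $ undefined = 0"
      by simp
    then show False
      by (simp add: mat_def)
  qed
  define y :: "real^('v \<times> 'v)" where "y = axis (v, v) 1"
  have "(\<Sum>w\<in>UNIV. adj E v w * y $ (w, v)) = 0"
    by (simp add: y_def axis_def if_distrib cong: if_cong)
  then have "(Mmat E *v y) $ (v, v) = 0"
    using dv by (simp add: Mmat_mult_apply y_def)
  then have "(Hmat E *v y) $ (v, v) = 1"
    by (simp add: Mmat_def matrix_vector_mult_diff_rdistrib y_def)
  then have "1 \<le> norm (Hmat E *v y)"
    using component_le_norm_cart[of "Hmat E *v y" "(v, v)"] by simp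
  also have "\<dots> \<le> snorm (Hmat E)"
    using norm_mult_le_snorm[of "Hmat E" y] by (simp add: y_def)
  finally show ?thesis .
qed

lemma e_xi_Suc:
  fixes coal :: "'v::finite \<Rightarrow> 'c" and x x' :: "real^'v" and xi xi' :: "'v \<Rightarrow> real^'v"
  assumes xi_upd: "\<forall>v p. xi' v $ p = xi v $ p
        - 1 / (deg E v + adj E v p) *
          ((\<Sum>w\<in>Nin E v. xi v $ p - xi w $ p) + adj E v p * (xi v $ p - x $ p))"
  shows "e_xi coal u x' xi' = Mmat E *v e_xi coal u x xi +
     (\<chi> r. pin_weight E (fst r) (snd r) * e_x coal u x $ snd r
         - (xbar coal u x' (coal (snd r)) - xbar coal u x (coal (snd r))))"
proof -
  let ?e = "e_xi coal u x xi"
  have e: "?e $ (w, q) = xi w $ q - xbar coal u x (coal q)" for w q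
    by (simp add: e_xi_def)
  have "e_xi coal u x' xi' $ (v, p) = (Mmat E *v ?e) $ (v, p)
     + (pin_weight E v p * e_x coal u x $ p - (xbar coal u x' (coal p) - xbar coal u x (coal p)))"
    for v p
  proof -
    have "(\<Sum>w\<in>Nin E v. xi v $ p - xi w $ p) = (\<Sum>w\<in>UNIV. adj E v w * (?e $ (v, p) - ?e $ (w, p)))"
      by (simp add: sum_Nin_eq_sum_adj e)
    also have "\<dots> = deg E v * ?e $ (v, p) - (\<Sum>w\<in>UNIV. adj E v w * ?e $ (w, p))"
      by (simp add: right_diff_distrib sum_subtractf deg_def sum_distrib_right)
    finally have neighbours: "(\<Sum>w\<in>Nin E v. xi v $ p - xi w $ p)
        = deg E v * ?e $ (v, p) - (\<Sum>w\<in>UNIV. adj E v w * ?e $ (w, p))" .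
    have pinning: "xi v $ p - x $ p = ?e $ (v, p) - e_x coal u x $ p"
      by (simp add: e e_x_def)
    have "e_xi coal u x' xi' $ (v, p) = xi' v $ p - xbar coal u x' (coal p)"
      by (simp add: e_xi_def)
    also have "xi' v $ p = ?e $ (v, p) + xbar coal u x (coal p)
        - (deg E v * ?e $ (v, p) - (\<Sum>w\<in>UNIV. adj E v w * ?e $ (w, p))
           + adj E v p * (?e $ (v, p) - e_x coal u x $ p)) / (deg E v + adj E v p)"
      by (simp add: xi_upd neighbours pinning e)
    finally show ?thesis
      by (simp add: Mmat_mult_apply pin_weight_def algebra_simps add_divide_distrib diff_divide_distrib)
  qed
  then show ?thesis
    by (simp add: vec_eq_iff)
qed

lemma sum_UNIV_group_memb: "(\<Sum>p\<in>UNIV. g p) = (\<Sum>i\<in>UNIV. \<Sum>p\<in>memb coal i. g p)"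
  for coal :: "'v::finite \<Rightarrow> 'c::finite"
  using sum.group[of "UNIV::'v set" "UNIV::'c set" coal g] by (simp add: memb_def)

lemma sum_UNIV_comp_coal: "(\<Sum>p\<in>UNIV. h (coal p)) = (\<Sum>i\<in>UNIV. real (ncard coal i) * h i)"
  for coal :: "'v::finite \<Rightarrow> 'c::finite" and h :: "'c \<Rightarrow> real"
  by (subst sum_UNIV_group_memb[of _ coal]) (simp add: memb_def ncard_def)

lemma power2_pinned_diff_le:
  fixes g e D T :: real
  assumes g: "0 \<le> g" "g \<le> 1/2" and D: "D\<^sup>2 \<le> T"
  shows "(g * e - D)\<^sup>2 \<le> 5/4 * e\<^sup>2 + g * T / 2 + D\<^sup>2"
proof -
  have "g\<^sup>2 \<le> (1/2)\<^sup>2"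
    using g by (intro power_mono) auto
  then have square: "g\<^sup>2 * e\<^sup>2 \<le> e\<^sup>2 / 4"
    using mult_right_mono[of "g\<^sup>2" "(1/2)\<^sup>2" "e\<^sup>2"] by (simp add: power2_eq_square)
  have "- 2 * e * D \<le> 2 * e\<^sup>2 + D\<^sup>2 / 2"
    using sum_squares_ge_zero[of "2 * e + D" 0] by (simp add: power2_eq_square algebra_simps)
  then have cross: "g * (- 2 * e * D) \<le> g * (2 * e\<^sup>2 + T / 2)"
    using g D by (intro mult_left_mono) auto
  have "g * (2 * e\<^sup>2) \<le> e\<^sup>2"
    using g mult_right_mono[of g "1/2" "2 * e\<^sup>2"] by simp
  moreover have "(g * e - D)\<^sup>2 = g\<^sup>2 * e\<^sup>2 + g * (- 2 * e * D) + D\<^sup>2"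
    by (simp add: power2_eq_square algebra_simps)
  ultimately show ?thesis
    using square cross by (simp add: algebra_simps)
qed

lemma norm_consensus_input_power2_le:
  fixes coal :: "'v::finite \<Rightarrow> 'c::finite" and ex :: "real^'v" and D :: "'c \<Rightarrow> real"
  shows "(norm (\<chi> r. pin_weight E (fst r) (snd r) * ex $ snd r - D (coal (snd r)) :: real^('v \<times> 'v)))\<^sup>2
     \<le> 5/4 * real CARD('v) * (norm ex)\<^sup>2
       + real CARD('v) * (\<Sum>i\<in>UNIV. (real (ncard coal i) + 1/2) * (D i)\<^sup>2)"
proof -
  define T where "T = (\<Sum>i\<in>UNIV. (D i)\<^sup>2)"
  have row: "(\<Sum>p\<in>UNIV. (pin_weight E v p * ex $ p - D (coal p))\<^sup>2)
      \<le> 5/4 * (norm ex)\<^sup>2 + (\<Sum>i\<in>UNIV. (real (ncard coal i) + 1/2) * (D i)\<^sup>2)" for v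
  proof -
    have "(\<Sum>p\<in>UNIV. (pin_weight E v p * ex $ p - D (coal p))\<^sup>2)
        \<le> (\<Sum>p\<in>UNIV. 5/4 * (ex $ p)\<^sup>2 + pin_weight E v p * T / 2 + (D (coal p))\<^sup>2)"
      by (intro sum_mono power2_pinned_diff_le pin_weight_nonneg pin_weight_le_half)
        (auto simp: T_def intro!: member_le_sum)
    also have "\<dots> = 5/4 * (norm ex)\<^sup>2 + (\<Sum>p\<in>UNIV. pin_weight E v p) * (T / 2)
        + (\<Sum>i\<in>UNIV. real (ncard coal i) * (D i)\<^sup>2)"
      by (simp add: sum.distrib norm_power2_cart sum_distrib_left sum_distrib_right
          sum_UNIV_comp_coal[of "\<lambda>i. (D i)\<^sup>2"])
    also have "\<dots> \<le> 5/4 * (norm ex)\<^sup>2 + T / 2 + (\<Sum>i\<in>UNIV. real (ncard coal i) * (D i)\<^sup>2)"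
      using mult_right_mono[OF sum_pin_weight_le_1[of E v], of "T / 2"]
      by (simp add: T_def sum_nonneg)
    finally show ?thesis
      by (simp add: T_def algebra_simps sum.distrib sum_divide_distrib)
  qed
  have "(norm (\<chi> r. pin_weight E (fst r) (snd r) * ex $ snd r - D (coal (snd r)) :: real^('v \<times> 'v)))\<^sup>2
      = (\<Sum>v\<in>UNIV. \<Sum>p\<in>UNIV. (pin_weight E v p * ex $ p - D (coal p))\<^sup>2)"
    by (simp add: norm_power2_cart sum_UNIV_prod)
  also have "\<dots> \<le> (\<Sum>v\<in>(UNIV::'v set).
      5/4 * (norm ex)\<^sup>2 + (\<Sum>i\<in>UNIV. (real (ncard coal i) + 1/2) * (D i)\<^sup>2))"
    by (rule sum_mono) (rule row)
  finally show ?thesis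
    by (simp add: algebra_simps)
qed

lemma xbar_Suc:
  fixes coal :: "'v::finite \<Rightarrow> 'c" and x x' :: "real^'v"
  assumes u_left: "\<forall>i m. coal m = i \<longrightarrow> (\<Sum>j\<in>memb coal i. u j * r j m) = u m"
    and x_upd: "\<forall>v. x' $ v = (\<Sum>m\<in>memb coal (coal v). r v m * x $ m)
        - \<alpha> / real (ncard coal (coal v)) * (\<Sum>m\<in>memb coal (coal v). ps v m)"
  shows "xbar coal u x' i = xbar coal u x i
     - \<alpha> / (real (ncard coal i))\<^sup>2 * (\<Sum>j\<in>memb coal i. u j * (\<Sum>m\<in>memb coal i. ps j m))"
proof -
  let ?S = "memb coal i" and ?n = "real (ncard coal i)"
  have coal_S: "j \<in> ?S \<Longrightarrow> coal j = i" for j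
    by (simp add: memb_def)
  have "(\<Sum>j\<in>?S. u j * x' $ j) = (\<Sum>j\<in>?S. u j * (\<Sum>m\<in>?S. r j m * x $ m)
      - \<alpha> / ?n * (u j * (\<Sum>m\<in>?S. ps j m)))"
    by (rule sum.cong) (auto simp: x_upd coal_S algebra_simps)
  also have "\<dots> = (\<Sum>j\<in>?S. \<Sum>m\<in>?S. u j * r j m * x $ m)
      - \<alpha> / ?n * (\<Sum>j\<in>?S. u j * (\<Sum>m\<in>?S. ps j m))"
    by (simp add: sum_subtractf sum_distrib_left mult.assoc)
  also have "(\<Sum>j\<in>?S. \<Sum>m\<in>?S. u j * r j m * x $ m) = (\<Sum>m\<in>?S. (\<Sum>j\<in>?S. u j * r j m) * x $ m)"
    by (subst sum.swap) (simp add: sum_distrib_right)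
  also have "(\<Sum>m\<in>?S. (\<Sum>j\<in>?S. u j * r j m) * x $ m) = (\<Sum>m\<in>?S. u m * x $ m)"
    by (rule sum.cong) (auto simp: u_left coal_S)
  finally show ?thesis
    unfolding xbar_def by (simp add: power2_eq_square diff_divide_distrib)
qed

lemma Vxi_increment_le:
  fixes coal :: "'v::finite \<Rightarrow> 'c::finite" and x x' :: "real^'v" and xi xi' :: "'v \<Rightarrow> real^'v"
  assumes W_sym: "transpose W = W"
    and W_lyap: "transpose (Mmat E) ** W ** Mmat E - W = - mat 1"
    and xi_upd: "\<forall>v p. xi' v $ p = xi v $ p
        - 1 / (deg E v + adj E v p) *
          ((\<Sum>w\<in>Nin E v. xi v $ p - xi w $ p) + adj E v p * (xi v $ p - x $ p))"
  shows "Vxi W (e_xi coal u x' xi') - Vxi W (e_xi coal u x xi)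
     \<le> -(1/2) * (norm (e_xi coal u x xi))\<^sup>2 + beta_xix E W * (norm (e_x coal u x))\<^sup>2
       + cW E W / 2 * real CARD('v)
         * (\<Sum>i\<in>UNIV. (real (ncard coal i) + 1/2) * (xbar coal u x' i - xbar coal u x i)\<^sup>2)"
proof -
  let ?e = "e_xi coal u x xi" and ?ex = "e_x coal u x" and ?n = "real CARD('v)"
  let ?\<Delta> = "\<Sum>i\<in>UNIV. (real (ncard coal i) + 1/2) * (xbar coal u x' i - xbar coal u x i)\<^sup>2"
  define d :: "real^('v \<times> 'v)" where "d = (\<chi> r. pin_weight E (fst r) (snd r) * ?ex $ snd r
      - (xbar coal u x' (coal (snd r)) - xbar coal u x (coal (snd r))))"
  have cW: "0 \<le> cW E W" "cW E W / 2 = 2 * (snorm (transpose (Mmat E) ** W))\<^sup>2 + snorm W"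
    by (simp_all add: cW_def snorm_nonneg)
  have "Vxi W (e_xi coal u x' xi') - Vxi W ?e \<le> -(1/2) * (norm ?e)\<^sup>2 + cW E W / 2 * (norm d)\<^sup>2"
    using lyapunov_increment_le[OF W_sym W_lyap, of ?e d]
    unfolding Vxi_def e_xi_Suc[OF xi_upd] d_def cW(2) .
  also have "cW E W / 2 * (norm d)\<^sup>2 \<le> cW E W / 2 * (5/4 * ?n * (norm ?ex)\<^sup>2 + ?n * ?\<Delta>)"
    using cW(1) unfolding d_def
    by (intro mult_left_mono norm_consensus_input_power2_le[where D = "\<lambda>i. xbar coal u x' i - xbar coal u x i"]) simp
  also have "cW E W / 2 * (5/4 * ?n * (norm ?ex)\<^sup>2) \<le> beta_xix E W * (norm ?ex)\<^sup>2"
  proof -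
    \<comment> \<open>\<open>\<parallel>H\<parallel> \<ge> 1\<close> lets \<open>beta_xix\<close> absorb the factor 5/8 left by the pinning terms.\<close>
    have "1 \<le> (snorm (Hmat E))\<^sup>2"
      using snorm_Hmat_ge_1[OF W_lyap] by (simp add: one_le_power)
    then have "cW E W / 2 * (5/4) \<le> cW E W * (snorm (Hmat E))\<^sup>2"
      using cW(1) mult_left_mono[of 1 "(snorm (Hmat E))\<^sup>2" "cW E W"] by linarith
    then have "cW E W / 2 * (5/4) * (?n * (norm ?ex)\<^sup>2)
        \<le> cW E W * (snorm (Hmat E))\<^sup>2 * (?n * (norm ?ex)\<^sup>2)"
      by (rule mult_right_mono) simp
    then show ?thesis
      by (simp add: beta_xix_def mult_ac)
  qed
  ultimately show ?thesis
    by (simp add: distrib_left mult.assoc)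
qed

subsection \<open>Coalition weights\<close>

lemma sum_memb_eq_one:
  fixes coal :: "'v::finite \<Rightarrow> 'c"
  assumes "A \<subseteq> memb coal (coal v)" and "\<forall>w. coal w = coal v \<and> w \<notin> A \<longrightarrow> g w = 0"
    and "(\<Sum>w\<in>A. g w) = 1"
  shows "(\<Sum>w\<in>memb coal (coal v). g w) = 1"
proof -
  have "(\<Sum>w\<in>memb coal (coal v). g w) = (\<Sum>w\<in>A. g w)"
    by (rule sum.mono_neutral_right) (use assms in \<open>auto simp: memb_def\<close>)
  with assms(3) show ?thesis
    by simp
qed

lemma left_subinvariant_imp_invariant:
  fixes w :: "'a \<Rightarrow> real"
  assumes fin: "finite S" and rows: "\<forall>j\<in>S. (\<Sum>m\<in>S. r j m) = 1"
    and sub: "\<forall>m\<in>S. w m \<le> (\<Sum>j\<in>S. w j * r j m)"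
  shows "\<forall>m\<in>S. w m = (\<Sum>j\<in>S. w j * r j m)"
proof -
  have "(\<Sum>m\<in>S. \<Sum>j\<in>S. w j * r j m) = (\<Sum>j\<in>S. w j * (\<Sum>m\<in>S. r j m))"
    by (subst sum.swap) (simp add: sum_distrib_left)
  also have "\<dots> = (\<Sum>m\<in>S. w m)"
    using rows by simp
  finally have "(\<Sum>m\<in>S. (\<Sum>j\<in>S. w j * r j m) - w m) = 0"
    by (simp add: sum_subtractf)
  moreover have "\<forall>m\<in>S. 0 \<le> (\<Sum>j\<in>S. w j * r j m) - w m"
    using sub by simp
  ultimately show ?thesis
    by (simp add: sum_nonneg_eq_0_iff[OF fin])
qed

lemma nonneg_left_fixed_point_vanishes:
  fixes w :: "'a \<Rightarrow> real" and r :: "'a \<Rightarrow> 'a \<Rightarrow> real"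
  assumes fin: "finite S"
    and r_nonneg: "\<forall>j\<in>S. \<forall>m\<in>S. 0 \<le> r j m"
    and r_edge: "\<forall>j\<in>S. \<forall>m\<in>S. (m, j) \<in> E \<longrightarrow> m \<noteq> j \<longrightarrow> 0 < r j m"
    and w_nonneg: "\<And>m. 0 \<le> w m"
    and w_fixed: "\<forall>m\<in>S. w m = (\<Sum>j\<in>S. w j * r j m)"
    and sc: "\<forall>a\<in>S. \<forall>b\<in>S. (a, b) \<in> (E \<inter> S \<times> S)\<^sup>*"
    and m0: "m0 \<in> S" "w m0 = 0"
  shows "\<forall>b\<in>S. w b = 0"
proof -
  have zero_step: "w j = 0" if "w m = 0" "m \<in> S" "j \<in> S" "(m, j) \<in> E" for m j
  proof (cases "m = j")
    case False
    have "(\<Sum>j\<in>S. w j * r j m) = 0"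
      using w_fixed that by simp
    then have "w j * r j m = 0"
      using sum_nonneg_eq_0_iff[OF fin, of "\<lambda>j. w j * r j m"] r_nonneg w_nonneg that by auto
    moreover have "0 < r j m"
      using r_edge that False by auto
    ultimately show ?thesis
      by simp
  qed (use that in simp)
  have "w b = 0" if "(m0, b) \<in> (E \<inter> S \<times> S)\<^sup>*" for b
    using that
  proof (induction rule: rtrancl_induct)
    case base
    then show ?case
      using m0 by simp
  next
    case (step y z)
    then show ?case
      using zero_step[of y z] by auto
  qed
  then show ?thesis
    using sc m0 by blast
qed

text \<open>The negative part of \<open>u\<close> is a nonnegative left sub-fixed point of \<open>r\<close>, hence a fixed
  point, and it vanishes wherever \<open>u > 0\<close>.\<close>

lemma stochastic_left_fixed_point_nonneg:
  fixes u :: "'a \<Rightarrow> real" and r :: "'a \<Rightarrow> 'a \<Rightarrow> real"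
  assumes fin: "finite S"
    and r_nonneg: "\<forall>j\<in>S. \<forall>m\<in>S. 0 \<le> r j m"
    and r_edge: "\<forall>j\<in>S. \<forall>m\<in>S. (m, j) \<in> E \<longrightarrow> m \<noteq> j \<longrightarrow> 0 < r j m"
    and rows: "\<forall>j\<in>S. (\<Sum>m\<in>S. r j m) = 1"
    and u_fixed: "\<forall>m\<in>S. (\<Sum>j\<in>S. u j * r j m) = u m"
    and u_pos: "0 < (\<Sum>j\<in>S. u j)"
    and sc: "\<forall>a\<in>S. \<forall>b\<in>S. (a, b) \<in> (E \<inter> S \<times> S)\<^sup>*"
  shows "\<forall>m\<in>S. 0 \<le> u m"
proof -
  define w where "w m = max (- u m) 0" for m
  have w_nonneg: "0 \<le> w m" for m
    by (simp add: w_def)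
  have "w m \<le> (\<Sum>j\<in>S. w j * r j m)" if m: "m \<in> S" for m
  proof -
    have "- u m = (\<Sum>j\<in>S. (- u j) * r j m)"
      using u_fixed m by (simp add: sum_negf)
    also have "\<dots> \<le> (\<Sum>j\<in>S. w j * r j m)"
      using r_nonneg m by (intro sum_mono mult_right_mono) (auto simp: w_def)
    finally show ?thesis
      using r_nonneg m w_nonneg by (simp add: w_def sum_nonneg)
  qed
  then have w_fixed: "\<forall>m\<in>S. w m = (\<Sum>j\<in>S. w j * r j m)"
    using left_subinvariant_imp_invariant[OF fin rows] by blast
  obtain m0 where m0: "m0 \<in> S" "0 < u m0"
  proof (rule ccontr)
    assume "\<not> thesis"
    then have "(\<Sum>j\<in>S. u j) \<le> 0"
      using that by (intro sum_nonpos) force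
    with u_pos show False
      by simp
  qed
  then have "w m0 = 0"
    by (simp add: w_def)
  with nonneg_left_fixed_point_vanishes[OF fin r_nonneg r_edge w_nonneg w_fixed sc m0(1)]
  show ?thesis
    by (metis max.cobounded1 neg_le_0_iff_le w_def)
qed

lemma coalition_left_eigvec_nonneg:
  fixes coal :: "'v::finite \<Rightarrow> 'c" and r :: "'v \<Rightarrow> 'v \<Rightarrow> real"
  assumes sc: "strongly_connected_on (memb coal i) E"
    and r_pos: "\<forall>v w. w \<in> Nin_c E coal v \<union> {v} \<longrightarrow> r v w > 0"
    and r_zero: "\<forall>v w. coal w = coal v \<and> w \<notin> Nin_c E coal v \<union> {v} \<longrightarrow> r v w = 0"
    and rows: "\<And>v. (\<Sum>w\<in>memb coal (coal v). r v w) = 1"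
    and u_left: "\<forall>i m. coal m = i \<longrightarrow> (\<Sum>j\<in>memb coal i. u j * r j m) = u m"
    and u_pos: "0 < (\<Sum>j\<in>memb coal i. u j)"
  shows "\<forall>j\<in>memb coal i. 0 \<le> u j"
proof (rule stochastic_left_fixed_point_nonneg[where r = r and E = E])
  let ?S = "memb coal i"
  show "\<forall>j\<in>?S. \<forall>m\<in>?S. 0 \<le> r j m"
  proof (intro ballI)
    fix j m
    assume "j \<in> ?S" "m \<in> ?S"
    then have "coal m = coal j"
      by (simp add: memb_def)
    then show "0 \<le> r j m"
      using r_pos[rule_format, where v = j and w = m] r_zero[rule_format, where v = j and w = m]
      by (cases "m \<in> Nin_c E coal j \<union> {j}") auto
  qed
  show "\<forall>j\<in>?S. \<forall>m\<in>?S. (m, j) \<in> E \<longrightarrow> m \<noteq> j \<longrightarrow> 0 < r j m"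
    using r_pos by (auto simp: memb_def Nin_c_def)
  show "\<forall>j\<in>?S. (\<Sum>m\<in>?S. r j m) = 1"
    using rows by (auto simp: memb_def)
  show "\<forall>m\<in>?S. (\<Sum>j\<in>?S. u j * r j m) = u m"
    using u_left by (auto simp: memb_def)
  show "\<forall>a\<in>?S. \<forall>b\<in>?S. (a, b) \<in> (E \<inter> ?S \<times> ?S)\<^sup>*"
    using sc by (simp add: strongly_connected_on_def)
qed (use u_pos in simp_all)

subsection \<open>Gradient tracking\<close>

lemma tracker_sum_eq_gradient_sum:
  fixes coal :: "'v::finite \<Rightarrow> 'c"
  assumes psi_init: "\<forall>v m. coal m = coal v \<longrightarrow> psi 0 v m = pd (f v) (xi 0 v) m"
    and psi_upd: "\<forall>k v m. coal m = coal v \<longrightarrow> psi (Suc k) v m =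
        (\<Sum>w\<in>memb coal (coal v). c v w * psi k w m)
        + pd (f v) (xi (Suc k) v) m - pd (f v) (xi k v) m"
    and cols: "\<And>w. (\<Sum>j\<in>memb coal (coal w). c j w) = 1"
    and m: "coal m = i"
  shows "(\<Sum>j\<in>memb coal i. psi k j m) = (\<Sum>j\<in>memb coal i. pd (f j) (xi k j) m)"
proof (induction k)
  case 0
  show ?case
    by (rule sum.cong) (auto simp: memb_def psi_init m)
next
  case (Suc k)
  let ?S = "memb coal i"
  have "(\<Sum>j\<in>?S. psi (Suc k) j m) = (\<Sum>j\<in>?S. \<Sum>w\<in>?S. c j w * psi k w m)
      + (\<Sum>j\<in>?S. pd (f j) (xi (Suc k) j) m) - (\<Sum>j\<in>?S. pd (f j) (xi k j) m)"
    by (simp add: memb_def psi_upd m sum.distrib sum_subtractf)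
  also have "(\<Sum>j\<in>?S. \<Sum>w\<in>?S. c j w * psi k w m) = (\<Sum>w\<in>?S. (\<Sum>j\<in>?S. c j w) * psi k w m)"
    by (subst sum.swap) (simp add: sum_distrib_right)
  also have "\<dots> = (\<Sum>w\<in>?S. psi k w m)"
    using cols by (intro sum.cong) (auto simp: memb_def)
  finally show ?case
    using Suc.IH by simp
qed

text \<open>First-order condition of coalition \<open>i\<close> at the equilibrium, along the direction that
  moves all of its members together.\<close>

lemma nash_equilibrium_coalition_gradient_sum:
  fixes coal :: "'v::finite \<Rightarrow> 'c::finite" and f :: "'v \<Rightarrow> real^'v \<Rightarrow> real"
  assumes diff: "\<And>v x. f v differentiable (at x)" and NE: "is_NE coal f ystar"
  shows "(\<Sum>v\<in>memb coal i. \<Sum>m\<in>memb coal i. pd (f v) (\<chi> w. ystar $ coal w) m) = 0"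
proof -
  let ?S = "memb coal i"
  define xs :: "real^'v" where "xs = (\<chi> w. ystar $ coal w)"
  define one :: "real^'v" where "one = (\<chi> w. if coal w = i then 1 else 0)"
  define h where "h t = (\<chi> w. if coal w = i then 0 else ystar $ coal w) + t *\<^sub>R one" for t :: real
  define F where "F v = frechet_derivative (f v) (at xs)" for v
  have "(\<chi> w. (\<chi> c. if c = i then t else ystar $ c) $ coal w) = h t" for t
    by (simp add: h_def one_def vec_eq_iff)
  then have h_gcost: "gcost coal f i (\<chi> c. if c = i then t else ystar $ c) = (\<Sum>v\<in>?S. f v (h t))"
    for t
    by (simp add: gcost_def)
  have h_ystar: "h (ystar $ i) = xs"
    by (simp add: h_def one_def xs_def vec_eq_iff)
  have "(\<chi> c. if c = i then ystar $ i else ystar $ c) = ystar"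
    by (simp add: vec_eq_iff)
  then have min: "(\<Sum>v\<in>?S. f v (h (ystar $ i))) \<le> (\<Sum>v\<in>?S. f v (h t))" for t
    using NE[unfolded is_NE_def, rule_format, of i t] h_gcost by metis
  have F: "(f v has_derivative F v) (at (h (ystar $ i)))" for v
    unfolding F_def h_ystar using diff frechet_derivative_works by blast
  have "((\<lambda>t. f v (h t)) has_field_derivative F v one) (at (ystar $ i))" for v
  proof -
    have "(h has_derivative (\<lambda>s. s *\<^sub>R one)) (at (ystar $ i))"
      unfolding h_def by (auto intro!: derivative_eq_intros)
    from diff_chain_at[OF this F]
    have "((\<lambda>t. f v (h t)) has_derivative (\<lambda>s. F v (s *\<^sub>R one))) (at (ystar $ i))"
      by (simp add: o_def)
    then show ?thesis
      using linear.scaleR[OF has_derivative_linear[OF F]]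
      by (auto elim: has_derivative_imp_has_field_derivative)
  qed
  then have "((\<lambda>t. \<Sum>v\<in>?S. f v (h t)) has_field_derivative (\<Sum>v\<in>?S. F v one)) (at (ystar $ i))"
    by (rule DERIV_sum)
  then have "(\<Sum>v\<in>?S. F v one) = 0"
    by (rule DERIV_local_min[of _ _ _ 1]) (use min in auto)
  moreover have "F v one = (\<Sum>m\<in>?S. pd (f v) xs m)" for v
  proof -
    have "one = (\<Sum>m\<in>?S. axis m 1)"
      by (simp add: one_def vec_eq_iff axis_def memb_def sum.If_cases)
    then show ?thesis
      using linear_sum[OF has_derivative_linear[OF F]] by (simp add: pd_def F_def)
  qed
  ultimately show ?thesis
    by (simp add: xs_def)
qed

subsection \<open>Bounding the increment of the coalition averages\<close>

lemma sum_pd_diff_power2_le: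
  fixes g :: "real^'v::finite \<Rightarrow> real"
  assumes "l-lipschitz_on UNIV (grad g)"
  shows "(\<Sum>m\<in>S. pd g a m - pd g b m)\<^sup>2 \<le> real (card S) * l\<^sup>2 * (norm (a - b))\<^sup>2"
proof -
  have "(\<Sum>m\<in>S. pd g a m - pd g b m)\<^sup>2 \<le> (\<Sum>m\<in>S. (pd g a m - pd g b m)\<^sup>2) * real (card S)"
    by (rule sum_squared_le_sum_of_squares)
  also have "(\<Sum>m\<in>S. (pd g a m - pd g b m)\<^sup>2) \<le> (\<Sum>m\<in>UNIV. (pd g a m - pd g b m)\<^sup>2)"
    by (rule sum_mono2) auto
  also have "\<dots> = (norm (grad g a - grad g b))\<^sup>2"
    by (simp add: norm_power2_cart grad_def)
  also have "\<dots> \<le> (l * norm (a - b))\<^sup>2"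
    using lipschitz_onD[OF assms, of a b] by (simp add: dist_norm power_mono)
  finally show ?thesis
    by (simp add: power_mult_distrib mult_ac mult_right_mono)
qed

lemma sum_sum_pd_diff_power2_le:
  fixes g :: "'a \<Rightarrow> real^'v::finite \<Rightarrow> real"
  assumes lip: "\<And>j. (l j)-lipschitz_on UNIV (grad (g j))"
  shows "(\<Sum>j\<in>A. \<Sum>m\<in>S. pd (g j) (a j) m - pd (g j) b m)\<^sup>2
     \<le> real (card S) * ((\<Sum>j\<in>A. (l j)\<^sup>2) * (\<Sum>j\<in>A. (norm (a j - b))\<^sup>2))"
proof -
  let ?n = "real (card S)"
  define D where "D j = (\<Sum>m\<in>S. pd (g j) (a j) m - pd (g j) b m)" for j
  have l_nonneg: "0 \<le> l j" for j
    using lip lipschitz_on_nonneg by blast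
  have "(D j)\<^sup>2 \<le> (sqrt ?n * (l j * norm (a j - b)))\<^sup>2" for j
    using sum_pd_diff_power2_le[OF lip[of j], where S = S and a = "a j" and b = b]
    by (simp add: D_def power_mult_distrib mult.assoc)
  then have D: "\<bar>D j\<bar> \<le> sqrt ?n * (l j * norm (a j - b))" for j
    using l_nonneg[of j] by (metis abs_le_square_iff abs_of_nonneg norm_ge_zero real_sqrt_ge_zero
        mult_nonneg_nonneg of_nat_0_le_iff)
  have "\<bar>\<Sum>j\<in>A. D j\<bar> \<le> (\<Sum>j\<in>A. sqrt ?n * (l j * norm (a j - b)))"
    using sum_abs[of D A] sum_mono[of A "\<lambda>j. \<bar>D j\<bar>", OF D] by linarith
  then have "(\<Sum>j\<in>A. D j)\<^sup>2 \<le> (\<Sum>j\<in>A. sqrt ?n * (l j * norm (a j - b)))\<^sup>2"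
    using abs_le_square_iff by fastforce
  also have "\<dots> = ?n * (\<Sum>j\<in>A. l j * norm (a j - b))\<^sup>2"
    by (simp add: sum_distrib_left[symmetric] power_mult_distrib)
  also have "\<dots> \<le> ?n * ((\<Sum>j\<in>A. (l j)\<^sup>2) * (\<Sum>j\<in>A. (norm (a j - b))\<^sup>2))"
    by (intro mult_left_mono Cauchy_Schwarz_ineq_sum) simp
  finally show ?thesis
    by (simp add: D_def)
qed

lemma sum_norm_diff_equilibrium_power2_le:
  fixes coal :: "'v::finite \<Rightarrow> 'c::finite" and Xi :: "'v \<Rightarrow> real^'v"
  assumes npos: "0 < ncard coal i"
  shows "(\<Sum>j\<in>memb coal i. (norm (Xi j - (\<chi> w. ystar $ coal w)))\<^sup>2)
     \<le> (1 + real (ncard coal i) * real (Max (range (ncard coal))))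
       * ((\<Sum>j\<in>memb coal i. \<Sum>p\<in>UNIV. (e_xi coal u x Xi $ (j, p))\<^sup>2)
          + (norm (e_xbar coal u ystar x))\<^sup>2)"
proof -
  let ?n = "real (ncard coal i)" and ?Mx = "real (Max (range (ncard coal)))"
  let ?e = "e_xi coal u x Xi" and ?eb = "e_xbar coal u ystar x"
  define t where "t = ?n * ?Mx"
  have ncard_le: "real (ncard coal c) \<le> ?Mx" for c
    by (simp add: Max_ge)
  have n: "1 \<le> ?n"
    using npos by simp
  moreover have "1 \<le> ?Mx"
    using n ncard_le[of i] by linarith
  ultimately have t: "0 < t" "?n * ((1 + 1 / t) * ?Mx) = 1 + t"
    by (simp_all add: t_def field_simps)
  have "(\<Sum>p\<in>UNIV. (?eb $ coal p)\<^sup>2) = (\<Sum>c\<in>UNIV. real (ncard coal c) * (?eb $ c)\<^sup>2)"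
    by (rule sum_UNIV_comp_coal)
  also have "\<dots> \<le> (\<Sum>c\<in>UNIV. ?Mx * (?eb $ c)\<^sup>2)"
    by (intro sum_mono mult_right_mono ncard_le) simp
  finally have eb: "(\<Sum>p\<in>UNIV. (?eb $ coal p)\<^sup>2) \<le> ?Mx * (norm ?eb)\<^sup>2"
    by (simp add: norm_power2_cart sum_distrib_left)
  have "(norm (Xi j - (\<chi> w. ystar $ coal w)))\<^sup>2 = (\<Sum>p\<in>UNIV. (?e $ (j, p) + ?eb $ coal p)\<^sup>2)" for j
    by (simp add: norm_power2_cart e_xi_def e_xbar_def)
  also have "\<dots> j \<le> (\<Sum>p\<in>UNIV. (1 + t) * (?e $ (j, p))\<^sup>2 + (1 + 1 / t) * (?eb $ coal p)\<^sup>2)" for j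
    by (intro sum_mono power2_add_le_weighted t)
  also have "\<dots> j \<le> (1 + t) * (\<Sum>p\<in>UNIV. (?e $ (j, p))\<^sup>2) + (1 + 1 / t) * (?Mx * (norm ?eb)\<^sup>2)" for j
    using mult_left_mono[OF eb, of "1 + 1 / t"] t by (simp add: sum.distrib sum_distrib_left)
  finally have "(\<Sum>j\<in>memb coal i. (norm (Xi j - (\<chi> w. ystar $ coal w)))\<^sup>2)
      \<le> (\<Sum>j\<in>memb coal i. (1 + t) * (\<Sum>p\<in>UNIV. (?e $ (j, p))\<^sup>2) + (1 + 1 / t) * (?Mx * (norm ?eb)\<^sup>2))"
    by (intro sum_mono)
  also have "\<dots> = (1 + t) * (\<Sum>j\<in>memb coal i. \<Sum>p\<in>UNIV. (?e $ (j, p))\<^sup>2)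
      + ?n * ((1 + 1 / t) * ?Mx) * (norm ?eb)\<^sup>2"
    by (simp add: sum.distrib sum_distrib_left ncard_def mult_ac)
  also have "\<dots> = (1 + t) * ((\<Sum>j\<in>memb coal i. \<Sum>p\<in>UNIV. (?e $ (j, p))\<^sup>2) + (norm ?eb)\<^sup>2)"
    unfolding t(2) by (simp add: algebra_simps)
  finally show ?thesis
    by (simp add: t_def)
qed

lemma tracker_mean_power2_le:
  fixes coal :: "'v::finite \<Rightarrow> 'c::finite" and f :: "'v \<Rightarrow> real^'v \<Rightarrow> real"
    and Xi :: "'v \<Rightarrow> real^'v" and ps :: "'v \<Rightarrow> 'v \<Rightarrow> real"
  assumes diff: "\<And>v x. f v differentiable (at x)"
    and lip: "\<And>v. (l v)-lipschitz_on UNIV (grad (f v))"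
    and NE: "is_NE coal f ystar"
    and tracking: "\<forall>m. coal m = i \<longrightarrow> (\<Sum>j\<in>memb coal i. ps j m) = (\<Sum>j\<in>memb coal i. pd (f j) (Xi j) m)"
    and npos: "0 < ncard coal i"
  shows "(\<Sum>m\<in>memb coal i. psibar coal ps i m)\<^sup>2
     \<le> (\<Sum>j\<in>memb coal i. (l j)\<^sup>2) * (1 / real (ncard coal i) + real (Max (range (ncard coal))))
        * ((\<Sum>j\<in>memb coal i. \<Sum>p\<in>UNIV. (e_xi coal u x Xi $ (j, p))\<^sup>2)
           + (norm (e_xbar coal u ystar x))\<^sup>2)"
proof -
  let ?S = "memb coal i" and ?n = "real (ncard coal i)"
  let ?xs = "\<chi> w. ystar $ coal w"
  let ?L = "\<Sum>j\<in>?S. (l j)\<^sup>2" and ?Mx = "real (Max (range (ncard coal)))"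
  let ?err = "(\<Sum>j\<in>?S. \<Sum>p\<in>UNIV. (e_xi coal u x Xi $ (j, p))\<^sup>2) + (norm (e_xbar coal u ystar x))\<^sup>2"
  define G where "G = (\<Sum>j\<in>?S. \<Sum>m\<in>?S. pd (f j) (Xi j) m - pd (f j) ?xs m)"
  have n: "1 \<le> ?n"
    using npos by simp
  have "(\<Sum>m\<in>?S. psibar coal ps i m) = (\<Sum>m\<in>?S. \<Sum>j\<in>?S. pd (f j) (Xi j) m) / ?n"
    using tracking by (simp add: psibar_def memb_def sum_divide_distrib)
  also have "(\<Sum>m\<in>?S. \<Sum>j\<in>?S. pd (f j) (Xi j) m)
      = G + (\<Sum>j\<in>?S. \<Sum>m\<in>?S. pd (f j) ?xs m)"
    by (subst sum.swap) (simp add: G_def sum_subtractf)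
  also have "(\<Sum>j\<in>?S. \<Sum>m\<in>?S. pd (f j) ?xs m) = 0"
    by (rule nash_equilibrium_coalition_gradient_sum[OF diff NE])
  finally have "(\<Sum>m\<in>?S. psibar coal ps i m)\<^sup>2 = G\<^sup>2 / ?n\<^sup>2"
    by (simp add: power_divide)
  moreover have "G\<^sup>2 \<le> ?n * (?L * ((1 + ?n * ?Mx) * ?err))"
  proof -
    have "G\<^sup>2 \<le> ?n * (?L * (\<Sum>j\<in>?S. (norm (Xi j - ?xs))\<^sup>2))"
      unfolding G_def using sum_sum_pd_diff_power2_le[OF lip, where A = ?S and S = ?S and a = Xi and b = ?xs] by (simp add: ncard_def)
    also have "\<dots> \<le> ?n * (?L * ((1 + ?n * ?Mx) * ?err))"
      using sum_norm_diff_equilibrium_power2_le[OF npos, where Xi = Xi and ystar = ystar and u = u and x = x]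
      by (intro mult_left_mono) (auto simp: sum_nonneg)
    finally show ?thesis .
  qed
  ultimately have "(\<Sum>m\<in>?S. psibar coal ps i m)\<^sup>2 \<le> ?n * (?L * ((1 + ?n * ?Mx) * ?err)) / ?n\<^sup>2"
    by (simp add: divide_right_mono)
  also have "\<dots> = ?L * (1 / ?n + ?Mx) * ?err"
    using n by (simp add: field_simps power2_eq_square)
  finally show ?thesis .
qed

lemma sum_mult_power2_le_of_sum_zero:
  fixes u a :: "'a \<Rightarrow> real"
  assumes "(\<Sum>j\<in>S. a j) = 0" and "(\<Sum>j\<in>S. u j) = real (card S)"
  shows "(\<Sum>j\<in>S. u j * a j)\<^sup>2 \<le> ((\<Sum>j\<in>S. (u j)\<^sup>2) - real (card S)) * (\<Sum>j\<in>S. (a j)\<^sup>2)"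
proof -
  have "(\<Sum>j\<in>S. u j * a j) = (\<Sum>j\<in>S. (u j - 1) * a j)"
    using assms(1) by (simp add: left_diff_distrib sum_subtractf)
  moreover have "(\<Sum>j\<in>S. (u j - 1)\<^sup>2) = (\<Sum>j\<in>S. (u j)\<^sup>2) - real (card S)"
    using assms(2) by (simp add: power2_diff sum.distrib sum_subtractf sum_distrib_left[symmetric])
  ultimately show ?thesis
    using Cauchy_Schwarz_ineq_sum[of "\<lambda>j. u j - 1" a S] by simp
qed

lemma sum_power2_le_power2_sum:
  fixes u :: "'a \<Rightarrow> real"
  assumes "\<forall>j\<in>S. 0 \<le> u j"
  shows "(\<Sum>j\<in>S. (u j)\<^sup>2) \<le> (\<Sum>j\<in>S. u j)\<^sup>2"
proof (cases "finite S")
  case True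
  have "(\<Sum>j\<in>S. (u j)\<^sup>2) \<le> (\<Sum>j\<in>S. u j * (\<Sum>i\<in>S. u i))"
    using assms True
    by (intro sum_mono) (auto simp: power2_eq_square intro!: mult_left_mono member_le_sum)
  then show ?thesis
    by (simp add: power2_eq_square sum_distrib_right)
qed simp

lemma power2_add_le_split:
  fixes P Q X Y U n :: real
  assumes n: "1 \<le> n" and U: "U \<le> n\<^sup>2" and P: "P\<^sup>2 \<le> (U - n) * X" and Q: "Q\<^sup>2 \<le> U * Y"
    and X: "0 \<le> X"
  shows "(2 * n + 1) / (4 * n) * (P + Q)\<^sup>2 \<le> U * X + U * Y"
proof -
  define t where "t = (2 * n + 1) / (2 * n - 1)"
  have pos: "0 < 2 * n - 1" "0 < 2 * n + 1" "0 < n"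
    using n by simp_all
  then have t: "0 < t"
    by (simp add: t_def)
  have "(2 * n + 1) / (4 * n) * (P + Q)\<^sup>2 \<le> (2 * n + 1) / (4 * n) * ((1 + t) * P\<^sup>2 + (1 + 1 / t) * Q\<^sup>2)"
    using power2_add_le_weighted[OF t] n by (intro mult_left_mono) auto
  also have "\<dots> = t * P\<^sup>2 + Q\<^sup>2"
  proof -
    have "1 + t = 4 * n / (2 * n - 1)" "1 + 1 / t = 4 * n / (2 * n + 1)"
      using pos by (simp_all add: t_def field_simps)
    then have "(2 * n + 1) / (4 * n) * (1 + t) = t" "(2 * n + 1) / (4 * n) * (1 + 1 / t) = 1"
      using pos by (simp_all add: t_def)
    then show ?thesis
      by (simp only: distrib_left[of "(2 * n + 1) / (4 * n)" "(1 + t) * P\<^sup>2"]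
          mult.assoc[symmetric] mult_1_left)
  qed
  also have "t * P\<^sup>2 \<le> U * X"
  proof -
    have "t * (U - n) \<le> U"
      using pos U by (simp add: t_def field_simps power2_eq_square)
    then have "t * ((U - n) * X) \<le> U * X"
      using X by (metis mult.assoc mult_right_mono)
    then show ?thesis
      using P t by (smt (verit) mult_left_mono)
  qed
  finally show ?thesis
    using Q by simp
qed

lemma u_weighted_deviation_power2_le:
  fixes u vv :: "'a \<Rightarrow> real" and ps :: "'a \<Rightarrow> 'a \<Rightarrow> real"
  assumes fin: "finite S" and ne: "S \<noteq> {}"
    and u_sum: "(\<Sum>j\<in>S. u j) = real (card S)" and v_sum: "(\<Sum>j\<in>S. vv j) = real (card S)"
  defines "pb m \<equiv> (\<Sum>j\<in>S. ps j m) / real (card S)"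
  shows "(\<Sum>j\<in>S. u j * (\<Sum>m\<in>S. ps j m - vv j * pb m))\<^sup>2
     \<le> ((\<Sum>j\<in>S. (u j)\<^sup>2) - real (card S))
       * (real (card S) * (\<Sum>j\<in>S. \<Sum>m\<in>S. (ps j m - vv j * pb m)\<^sup>2))"
proof -
  define n where "n = real (card S)"
  define a where "a j = (\<Sum>m\<in>S. ps j m - vv j * pb m)" for j
  have n: "1 \<le> n"
    using fin ne by (simp add: n_def Suc_leI card_gt_0_iff)
  have "(\<Sum>j\<in>S. a j) = (\<Sum>m\<in>S. (\<Sum>j\<in>S. ps j m) - (\<Sum>j\<in>S. vv j) * pb m)"
    unfolding a_def by (subst sum.swap) (simp add: sum_subtractf sum_distrib_right)
  also have "\<dots> = 0"
    using n by (simp add: v_sum pb_def n_def)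
  finally have "(\<Sum>j\<in>S. u j * a j)\<^sup>2 \<le> ((\<Sum>j\<in>S. (u j)\<^sup>2) - n) * (\<Sum>j\<in>S. (a j)\<^sup>2)"
    using sum_mult_power2_le_of_sum_zero[where S = S and a = a and u = u] u_sum by (simp add: n_def)
  also have "\<dots> \<le> ((\<Sum>j\<in>S. (u j)\<^sup>2) - n) * (n * (\<Sum>j\<in>S. \<Sum>m\<in>S. (ps j m - vv j * pb m)\<^sup>2))"
  proof (rule mult_left_mono)
    have "(\<Sum>j\<in>S. (a j)\<^sup>2) \<le> (\<Sum>j\<in>S. n * (\<Sum>m\<in>S. (ps j m - vv j * pb m)\<^sup>2))"
      unfolding a_def n_def by (intro sum_mono) (metis sum_squared_le_sum_of_squares mult.commute)
    then show "(\<Sum>j\<in>S. (a j)\<^sup>2) \<le> n * (\<Sum>j\<in>S. \<Sum>m\<in>S. (ps j m - vv j * pb m)\<^sup>2)"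
      by (simp add: sum_distrib_left)
    show "0 \<le> (\<Sum>j\<in>S. (u j)\<^sup>2) - n"
      using sum_squared_le_sum_of_squares[of u S] u_sum n by (simp add: n_def power2_eq_square)
  qed
  finally show ?thesis
    unfolding a_def n_def .
qed

lemma u_weighted_sum_power2_le:
  fixes u vv :: "'a \<Rightarrow> real" and ps :: "'a \<Rightarrow> 'a \<Rightarrow> real"
  assumes fin: "finite S" and ne: "S \<noteq> {}"
    and u_nonneg: "\<forall>j\<in>S. 0 \<le> u j" and u_sum: "(\<Sum>j\<in>S. u j) = real (card S)"
    and v_sum: "(\<Sum>j\<in>S. vv j) = real (card S)"
    and K: "(\<Sum>m\<in>S. (\<Sum>j\<in>S. ps j m) / real (card S))\<^sup>2 \<le> K"
  shows "(2 * real (card S) + 1) / (4 * real (card S)) * (\<Sum>j\<in>S. u j * (\<Sum>m\<in>S. ps j m))\<^sup>2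
     \<le> (\<Sum>j\<in>S. (u j)\<^sup>2) * (real (card S)
         * (\<Sum>j\<in>S. \<Sum>m\<in>S. (ps j m - vv j * ((\<Sum>j'\<in>S. ps j' m) / real (card S)))\<^sup>2)
         + (\<Sum>j\<in>S. (vv j)\<^sup>2) * K)"
proof -
  define n where "n = real (card S)"
  define pb where "pb m = (\<Sum>j\<in>S. ps j m) / n" for m
  define U where "U = (\<Sum>j\<in>S. (u j)\<^sup>2)"
  define Ep where "Ep = (\<Sum>j\<in>S. \<Sum>m\<in>S. (ps j m - vv j * pb m)\<^sup>2)"
  let ?a = "\<lambda>j. \<Sum>m\<in>S. ps j m - vv j * pb m"
  have n: "1 \<le> n"
    using fin ne by (simp add: n_def Suc_leI card_gt_0_iff)
  have "(\<Sum>m\<in>S. ps j m) = ?a j + vv j * (\<Sum>m\<in>S. pb m)" for j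
    by (simp add: sum_subtractf sum_distrib_left)
  then have split: "(\<Sum>j\<in>S. u j * (\<Sum>m\<in>S. ps j m))
      = (\<Sum>j\<in>S. u j * ?a j) + (\<Sum>j\<in>S. u j * vv j) * (\<Sum>m\<in>S. pb m)"
    by (simp add: distrib_left sum.distrib sum_distrib_right mult.assoc)
  have P: "(\<Sum>j\<in>S. u j * ?a j)\<^sup>2 \<le> (U - n) * (n * Ep)"
    using u_weighted_deviation_power2_le[OF fin ne u_sum v_sum, of ps]
    by (simp add: U_def Ep_def pb_def n_def)
  have "((\<Sum>j\<in>S. u j * vv j) * (\<Sum>m\<in>S. pb m))\<^sup>2
      = (\<Sum>j\<in>S. u j * vv j)\<^sup>2 * (\<Sum>m\<in>S. pb m)\<^sup>2"
    by (simp add: power_mult_distrib)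
  also have "\<dots> \<le> (U * (\<Sum>j\<in>S. (vv j)\<^sup>2)) * K"
    using Cauchy_Schwarz_ineq_sum[of u vv S] K
    by (intro mult_mono) (auto simp: U_def pb_def n_def sum_nonneg)
  finally have Q: "((\<Sum>j\<in>S. u j * vv j) * (\<Sum>m\<in>S. pb m))\<^sup>2 \<le> U * ((\<Sum>j\<in>S. (vv j)\<^sup>2) * K)"
    by (simp add: mult.assoc)
  have "U \<le> n\<^sup>2"
    using sum_power2_le_power2_sum[OF u_nonneg] u_sum by (simp add: U_def n_def)
  moreover have "0 \<le> n * Ep"
    using n by (simp add: Ep_def sum_nonneg)
  ultimately show ?thesis
    using power2_add_le_split[OF n _ P Q] unfolding split
    by (simp add: U_def Ep_def pb_def n_def distrib_left)
qed

lemma sum_power2_div_le_snorm_Pmat: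
  fixes coal :: "'v::finite \<Rightarrow> 'c::finite"
  assumes npos: "0 < ncard coal i"
  shows "(\<Sum>j\<in>memb coal i. (u j)\<^sup>2) / (real (ncard coal i)) ^ 3 \<le> (snorm (Pmat coal u i))\<^sup>2"
proof -
  let ?n = "real (ncard coal i)" and ?U = "\<Sum>j\<in>memb coal i. (u j)\<^sup>2"
  define y :: "real^'v" where "y = (\<chi> b. if coal b = i then u b else 0)"
  have "(Pmat coal u i *v y) $ a = (\<Sum>b\<in>UNIV. if coal a = i \<and> coal b = i then (u b)\<^sup>2 / ?n\<^sup>2 else 0)"
    for a
    unfolding matrix_vector_mult_def Pmat_def y_def
    by (simp, intro sum.cong) (auto simp: power2_eq_square)
  then have Py: "(Pmat coal u i *v y) $ a = (if coal a = i then ?U / ?n\<^sup>2 else 0)" for a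
    by (auto simp: sum.If_cases memb_def sum_divide_distrib Collect_conj_eq[symmetric] cong: conj_cong)
  have ny: "(norm y)\<^sup>2 = ?U"
    by (simp add: norm_power2_cart y_def if_distrib[of "\<lambda>z. z\<^sup>2"] sum.If_cases memb_def cong: if_cong)
  have "(norm (Pmat coal u i *v y))\<^sup>2 = ?n * (?U / ?n\<^sup>2)\<^sup>2"
    by (simp add: norm_power2_cart Py if_distrib[of "\<lambda>z. z\<^sup>2"] sum.If_cases memb_def ncard_def
        cong: if_cong)
  moreover have "(norm (Pmat coal u i *v y))\<^sup>2 \<le> (snorm (Pmat coal u i) * norm y)\<^sup>2"
    using norm_mult_le_snorm by (intro power_mono) auto
  ultimately have "?n * (?U / ?n\<^sup>2)\<^sup>2 \<le> (snorm (Pmat coal u i))\<^sup>2 * ?U"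
    by (simp add: power_mult_distrib ny)
  moreover have "?n * (?U / ?n\<^sup>2)\<^sup>2 = ?U * (?U / ?n ^ 3)"
    using npos by (simp add: power2_eq_square power3_eq_cube field_simps)
  ultimately have main: "?U * (?U / ?n ^ 3) \<le> ?U * (snorm (Pmat coal u i))\<^sup>2"
    by (simp add: mult.commute)
  show ?thesis
  proof (cases "?U = 0")
    case False
    then have "0 < ?U"
      by (metis less_eq_real_def sum_nonneg zero_le_power2)
    with main show ?thesis
      by (simp only: mult_le_cancel_left_pos)
  qed simp
qed

definition coalition_error ::
    "('v::finite \<Rightarrow> 'c::finite) \<Rightarrow> ('v \<Rightarrow> real) \<Rightarrow> ('v \<Rightarrow> real) \<Rightarrow> real^'c \<Rightarrow> real^'v
      \<Rightarrow> ('v \<Rightarrow> real^'v) \<Rightarrow> ('v \<Rightarrow> 'v \<Rightarrow> real) \<Rightarrow> 'c \<Rightarrow> real" where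
  "coalition_error coal u vv ystar x xi psi i =
     (\<Sum>j\<in>memb coal i. \<Sum>m\<in>memb coal i. (psi j m - vv j * psibar coal psi i m)\<^sup>2)
     + (\<Sum>j\<in>memb coal i. \<Sum>p\<in>UNIV. (e_xi coal u x xi $ (j, p))\<^sup>2)
     + (norm (e_xbar coal u ystar x))\<^sup>2"

lemma coalition_error_nonneg: "0 \<le> coalition_error coal u vv ystar x xi psi i"
  by (simp add: coalition_error_def sum_nonneg)

lemma sum_coalition_error:
  fixes coal :: "'v::finite \<Rightarrow> 'c::finite"
  shows "(\<Sum>i\<in>UNIV. coalition_error coal u vv ystar x xi psi i)
     = (norm (e_psi coal vv psi))\<^sup>2 + (norm (e_xi coal u x xi))\<^sup>2
       + real CARD('c) * (norm (e_xbar coal u ystar x))\<^sup>2"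
proof -
  have "(\<Sum>m\<in>UNIV. (e_psi coal vv psi $ (j, m))\<^sup>2)
      = (\<Sum>m\<in>memb coal (coal j). (psi j m - vv j * psibar coal psi (coal j) m)\<^sup>2)" for j
  proof -
    have "(\<Sum>m\<in>UNIV. (e_psi coal vv psi $ (j, m))\<^sup>2) = (\<Sum>m\<in>UNIV.
        if m \<in> memb coal (coal j) then (psi j m - vv j * psibar coal psi (coal j) m)\<^sup>2 else 0)"
      by (rule sum.cong) (auto simp: e_psi_def memb_def)
    then show ?thesis
      by (simp add: sum.If_cases)
  qed
  then have "(norm (e_psi coal vv psi))\<^sup>2
      = (\<Sum>j\<in>UNIV. \<Sum>m\<in>memb coal (coal j). (psi j m - vv j * psibar coal psi (coal j) m)\<^sup>2)"
    by (simp add: norm_power2_cart sum_UNIV_prod)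
  also have "\<dots> = (\<Sum>i\<in>UNIV. \<Sum>j\<in>memb coal i. \<Sum>m\<in>memb coal (coal j).
      (psi j m - vv j * psibar coal psi (coal j) m)\<^sup>2)"
    by (rule sum_UNIV_group_memb)
  also have "\<dots> = (\<Sum>i\<in>UNIV. \<Sum>j\<in>memb coal i. \<Sum>m\<in>memb coal i. (psi j m - vv j * psibar coal psi i m)\<^sup>2)"
    by (intro sum.cong refl) (auto simp: memb_def)
  finally have psi_part: "(norm (e_psi coal vv psi))\<^sup>2
      = (\<Sum>i\<in>UNIV. \<Sum>j\<in>memb coal i. \<Sum>m\<in>memb coal i. (psi j m - vv j * psibar coal psi i m)\<^sup>2)" .
  have "(norm (e_xi coal u x xi))\<^sup>2 = (\<Sum>j\<in>UNIV. \<Sum>p\<in>UNIV. (e_xi coal u x xi $ (j, p))\<^sup>2)"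
    by (simp add: norm_power2_cart sum_UNIV_prod)
  also have "\<dots> = (\<Sum>i\<in>UNIV. \<Sum>j\<in>memb coal i. \<Sum>p\<in>UNIV. (e_xi coal u x xi $ (j, p))\<^sup>2)"
    by (rule sum_UNIV_group_memb)
  finally have xi_part: "(norm (e_xi coal u x xi))\<^sup>2
      = (\<Sum>i\<in>UNIV. \<Sum>j\<in>memb coal i. \<Sum>p\<in>UNIV. (e_xi coal u x xi $ (j, p))\<^sup>2)" .
  show ?thesis
    unfolding coalition_error_def sum.distrib psi_part xi_part by simp
qed

lemma xbar_increment_power2_le:
  fixes coal :: "'v::finite \<Rightarrow> 'c::finite" and f :: "'v \<Rightarrow> real^'v \<Rightarrow> real"
    and Xi :: "'v \<Rightarrow> real^'v" and ps :: "'v \<Rightarrow> 'v \<Rightarrow> real"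
  assumes diff: "\<And>v x. f v differentiable (at x)"
    and lip: "\<And>v. (l v)-lipschitz_on UNIV (grad (f v))"
    and NE: "is_NE coal f ystar"
    and npos: "0 < ncard coal i"
    and u_nonneg: "\<forall>j\<in>memb coal i. 0 \<le> u j"
    and u_norm: "(\<Sum>j\<in>memb coal i. u j) = real (ncard coal i)"
    and v_norm: "(\<Sum>j\<in>memb coal i. vv j) = real (ncard coal i)"
    and tracking: "\<forall>m. coal m = i \<longrightarrow>
      (\<Sum>j\<in>memb coal i. ps j m) = (\<Sum>j\<in>memb coal i. pd (f j) (Xi j) m)"
    and increment: "xbar coal u x' i = xbar coal u x i
      - \<alpha> / (real (ncard coal i))\<^sup>2 * (\<Sum>j\<in>memb coal i. u j * (\<Sum>m\<in>memb coal i. ps j m))"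
  shows "(real (ncard coal i) + 1/2) * (xbar coal u x' i - xbar coal u x i)\<^sup>2
     \<le> 2 * \<alpha>\<^sup>2 * (snorm (Pmat coal u i))\<^sup>2 * (b0 coal vv l i * coalition_error coal u vv ystar x Xi ps i)"
proof -
  let ?S = "memb coal i" and ?n = "real (ncard coal i)"
  let ?U = "\<Sum>j\<in>?S. (u j)\<^sup>2" and ?V = "\<Sum>j\<in>?S. (vv j)\<^sup>2" and ?L = "\<Sum>j\<in>?S. (l j)\<^sup>2"
  let ?Mx = "real (Max (range (ncard coal)))"
  let ?Ep = "\<Sum>j\<in>?S. \<Sum>m\<in>?S. (ps j m - vv j * psibar coal ps i m)\<^sup>2"
  let ?err = "(\<Sum>j\<in>?S. \<Sum>p\<in>UNIV. (e_xi coal u x Xi $ (j, p))\<^sup>2) + (norm (e_xbar coal u ystar x))\<^sup>2"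
  let ?K = "?L * (1 / ?n + ?Mx) * ?err"
  let ?us = "\<Sum>j\<in>?S. u j * (\<Sum>m\<in>?S. ps j m)"
  let ?C = "coalition_error coal u vv ystar x Xi ps i"
  have n: "1 \<le> ?n"
    using npos by simp
  have "(\<Sum>m\<in>?S. psibar coal ps i m)\<^sup>2 \<le> ?K"
    by (rule tracker_mean_power2_le[OF diff lip NE tracking npos])
  then have "(2 * ?n + 1) / (4 * ?n) * ?us\<^sup>2 \<le> ?U * (?n * ?Ep + ?V * ?K)"
    using u_weighted_sum_power2_le[of ?S u vv ps ?K] u_nonneg u_norm v_norm npos
    by (simp add: psibar_def ncard_def card_gt_0_iff)
  also have "\<dots> \<le> ?U * (b0 coal vv l i * ?C)"
  proof (rule mult_left_mono)
    have "b0 coal vv l i * ?C = ?n * ?Ep + ?V * ?K + (?n * ?err + (1 / ?n + ?Mx) * ?V * ?L * ?Ep)"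
      by (simp add: b0_def coalition_error_def algebra_simps)
    moreover have "0 \<le> ?n * ?err + (1 / ?n + ?Mx) * ?V * ?L * ?Ep"
      by (simp add: sum_nonneg)
    ultimately show "?n * ?Ep + ?V * ?K \<le> b0 coal vv l i * ?C"
      by linarith
  qed (simp add: sum_nonneg)
  finally have key: "(2 * ?n + 1) / (4 * ?n) * ?us\<^sup>2 \<le> ?U * (b0 coal vv l i * ?C)" .
  have b0C: "0 \<le> b0 coal vv l i * ?C"
    by (simp add: b0_def coalition_error_nonneg sum_nonneg)
  have "(?n + 1/2) * (xbar coal u x' i - xbar coal u x i)\<^sup>2
      = 2 * \<alpha>\<^sup>2 * ((2 * ?n + 1) / (4 * ?n) * ?us\<^sup>2) / ?n ^ 3"
    using n by (simp add: increment power2_eq_square power3_eq_cube field_simps)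
  also have "\<dots> \<le> 2 * \<alpha>\<^sup>2 * (?U * (b0 coal vv l i * ?C)) / ?n ^ 3"
    using key by (intro divide_right_mono mult_left_mono) auto
  also have "\<dots> = 2 * \<alpha>\<^sup>2 * (?U / ?n ^ 3) * (b0 coal vv l i * ?C)"
    by simp
  also have "\<dots> \<le> 2 * \<alpha>\<^sup>2 * (snorm (Pmat coal u i))\<^sup>2 * (b0 coal vv l i * ?C)"
    using sum_power2_div_le_snorm_Pmat[OF npos] b0C by (intro mult_right_mono mult_left_mono) auto
  finally show ?thesis .
qed

lemma sum_mult_le_Max_mult_sum:
  fixes b T :: "'a \<Rightarrow> real"
  assumes "finite A" and "\<forall>i\<in>A. 0 \<le> T i"
  shows "(\<Sum>i\<in>A. b i * T i) \<le> (MAX i\<in>A. b i) * (\<Sum>i\<in>A. T i)"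
  using assms by (auto simp: sum_distrib_left intro!: sum_mono mult_right_mono)

lemma sum_xbar_increments_le:
  fixes coal :: "'v::finite \<Rightarrow> 'c::finite" and \<Delta> C :: "'c \<Rightarrow> real"
  assumes increment: "\<And>i. (real (ncard coal i) + 1/2) * (\<Delta> i)\<^sup>2
      \<le> 2 * \<alpha>\<^sup>2 * (snorm (Pmat coal u i))\<^sup>2 * (b0 coal vv l i * C i)"
    and C_nonneg: "\<And>i. 0 \<le> C i"
  shows "cW E W / 2 * real CARD('v) * (\<Sum>i\<in>UNIV. (real (ncard coal i) + 1/2) * (\<Delta> i)\<^sup>2)
     \<le> \<alpha>\<^sup>2 * (MAX i\<in>UNIV. b2 E W coal u vv l i) * (\<Sum>i\<in>UNIV. C i)"
proof -
  have "0 \<le> cW E W / 2 * real CARD('v)"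
    by (simp add: cW_def snorm_nonneg)
  from mult_left_mono[OF increment this]
  have "cW E W / 2 * real CARD('v) * ((real (ncard coal i) + 1/2) * (\<Delta> i)\<^sup>2)
      \<le> \<alpha>\<^sup>2 * (b2 E W coal u vv l i * C i)" for i
    by (simp add: b2_def mult_ac)
  then have "cW E W / 2 * real CARD('v) * (\<Sum>i\<in>UNIV. (real (ncard coal i) + 1/2) * (\<Delta> i)\<^sup>2)
      \<le> \<alpha>\<^sup>2 * (\<Sum>i\<in>UNIV. b2 E W coal u vv l i * C i)"
    unfolding sum_distrib_left by (rule sum_mono)
  also have "\<dots> \<le> \<alpha>\<^sup>2 * ((MAX i\<in>UNIV. b2 E W coal u vv l i) * (\<Sum>i\<in>UNIV. C i))"
    by (intro mult_left_mono sum_mult_le_Max_mult_sum) (simp_all add: C_nonneg)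
  finally show ?thesis
    by (simp only: mult.assoc)
qed

theorem lemma3:
  fixes coal :: "'v::finite \<Rightarrow> 'c::finite"
    and E :: "('v \<times> 'v) set"
    and f :: "'v \<Rightarrow> real^'v \<Rightarrow> real"
    and l :: "'v \<Rightarrow> real"
    and ystar :: "real^'c"
    and r c :: "'v \<Rightarrow> 'v \<Rightarrow> real"
    and u vv :: "'v \<Rightarrow> real"
    and W :: "real^('v \<times> 'v)^('v \<times> 'v)"
    and \<alpha> :: real
    and x :: "nat \<Rightarrow> real^'v"
    and xi :: "nat \<Rightarrow> 'v \<Rightarrow> real^'v"
    and psi :: "nat \<Rightarrow> 'v \<Rightarrow> 'v \<Rightarrow> real"
    and k :: nat
  assumes coal_surj: "surj coal"
    and A1_G: "strongly_connected_on UNIV E"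
    and A1_Gi: "\<forall>i. strongly_connected_on (memb coal i) E"
    and A2: "\<forall>v. convex_on UNIV (f v) \<and> C2 (f v) \<and> (l v)-lipschitz_on UNIV (grad (f v))"
    and NE: "is_NE coal f ystar"
    and r_pos: "\<forall>v w. w \<in> Nin_c E coal v \<union> {v} \<longrightarrow> r v w > 0"
    and r_sum: "\<forall>v. (\<Sum>w\<in>Nin_c E coal v \<union> {v}. r v w) = 1"
    and r_zero: "\<forall>v w. coal w = coal v \<and> w \<notin> Nin_c E coal v \<union> {v} \<longrightarrow> r v w = 0"
    and c_pos: "\<forall>v w. w \<in> Nout_c E coal v \<union> {v} \<longrightarrow> c w v > 0"
    and c_sum: "\<forall>v. (\<Sum>w\<in>Nout_c E coal v \<union> {v}. c w v) = 1"
    and c_zero: "\<forall>v w. coal w = coal v \<and> w \<notin> Nout_c E coal v \<union> {v} \<longrightarrow> c w v = 0"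
    and u_left: "\<forall>i m. coal m = i \<longrightarrow> (\<Sum>j\<in>memb coal i. u j * r j m) = u m"
    and u_norm: "\<forall>i. (\<Sum>j\<in>memb coal i. u j) = real (ncard coal i)"
    and v_right: "\<forall>i j. coal j = i \<longrightarrow> (\<Sum>m\<in>memb coal i. c j m * vv m) = vv j"
    and v_norm: "\<forall>i. (\<Sum>j\<in>memb coal i. vv j) = real (ncard coal i)"
    and W_sym: "transpose W = W"
    and W_pd: "\<forall>z. z \<noteq> 0 \<longrightarrow> z \<bullet> (W *v z) > 0"
    and W_lyap: "transpose (Mmat E) ** W ** Mmat E - W = - mat 1"
    and alpha_pos: "\<alpha> > 0"
    and psi_init: "\<forall>v m. coal m = coal v \<longrightarrow> psi 0 v m = pd (f v) (xi 0 v) m"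
    and x_upd: "\<forall>k v. x (Suc k) $ v =
        (\<Sum>m\<in>memb coal (coal v). r v m * x k $ m)
        - \<alpha> / real (ncard coal (coal v)) * (\<Sum>m\<in>memb coal (coal v). psi k v m)"
    and xi_upd: "\<forall>k v p. xi (Suc k) v $ p = xi k v $ p
        - 1 / (deg E v + adj E v p) *
          ((\<Sum>w\<in>Nin E v. xi k v $ p - xi k w $ p) + adj E v p * (xi k v $ p - x k $ p))"
    and psi_upd: "\<forall>k v m. coal m = coal v \<longrightarrow> psi (Suc k) v m =
        (\<Sum>w\<in>memb coal (coal v). c v w * psi k w m)
        + pd (f v) (xi (Suc k) v) m - pd (f v) (xi k v) m"
  shows "Vxi W (e_xi coal u (x (Suc k)) (xi (Suc k))) - Vxi W (e_xi coal u (x k) (xi k))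
     \<le> - (1/2) * (norm (e_xi coal u (x k) (xi k)))\<^sup>2
       + beta_xix E W * (norm (e_x coal u (x k)))\<^sup>2
       + \<alpha>\<^sup>2 * (MAX i\<in>UNIV. b2 E W coal u vv l i) *
         ((norm (e_psi coal vv (psi k)))\<^sup>2 + (norm (e_xi coal u (x k) (xi k)))\<^sup>2
          + real CARD('c) * (norm (e_xbar coal u ystar (x k)))\<^sup>2)"
proof -
  have npos: "0 < ncard coal i" for i
    using surjD[OF coal_surj, of i] by (auto simp: ncard_def memb_def card_gt_0_iff)
  have diff: "f v differentiable (at z)" for v z
    using A2 unfolding C2_def differentiable_def by blast
  have lip: "(l v)-lipschitz_on UNIV (grad (f v))" for v
    using A2 by blast
  have rows: "(\<Sum>w\<in>memb coal (coal v). r v w) = 1" for v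
    by (rule sum_memb_eq_one[of "Nin_c E coal v \<union> {v}"])
      (use r_zero r_sum in \<open>auto simp: memb_def Nin_c_def\<close>)
  have cols: "(\<Sum>j\<in>memb coal (coal w). c j w) = 1" for w
    by (rule sum_memb_eq_one[of "Nout_c E coal w \<union> {w}"])
      (use c_zero c_sum in \<open>auto simp: memb_def Nout_c_def\<close>)
  have u_nonneg: "\<forall>j\<in>memb coal i. 0 \<le> u j" for i
    by (rule coalition_left_eigvec_nonneg[OF A1_Gi[rule_format] r_pos r_zero rows u_left])
      (simp add: u_norm npos)
  have "(real (ncard coal i) + 1/2) * (xbar coal u (x (Suc k)) i - xbar coal u (x k) i)\<^sup>2
      \<le> 2 * \<alpha>\<^sup>2 * (snorm (Pmat coal u i))\<^sup>2
        * (b0 coal vv l i * coalition_error coal u vv ystar (x k) (xi k) (psi k) i)" for i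
    using tracker_sum_eq_gradient_sum[OF psi_init psi_upd cols]
    by (intro xbar_increment_power2_le[OF diff lip NE npos u_nonneg u_norm[rule_format]
        v_norm[rule_format] _ xbar_Suc[OF u_left spec[OF x_upd]]]) auto
  from sum_xbar_increments_le[OF this coalition_error_nonneg, where E = E and W = W]
    and Vxi_increment_le[OF W_sym W_lyap spec[OF xi_upd, of k], of coal u "x (Suc k)"]
  show ?thesis
    unfolding sum_coalition_error by linarith
qed

end
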